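(* Assume (A1). Let $W_1,W_2,\dots$ be i.i.d. copies of $V$. Then, as $n/K\to\infty$, $$\sum_{k=0}^{\infty}b^k\,\mathbf P\Big(n\prod_{j=1}^{k}W_j\ge K\Big)=(\mu^{-1}+o(1))\frac nK .$$ Equivalently, the expected number of vertices $v$ of $S_b$ with $M_v^n\ge K$ is $(\mu^{-1}+o(1))\,n/K$.
   Context: $b\ge2$ is an integer and $\mathcal V=(V_1,\dots,V_b)$ is a random vector with $V_i\ge0$, $\sum_iV_i=1$ and identically distributed components; $V$ has their common law. $S_b$ is the infinite rooted tree in which each vertex has $b$ children labelled $1,\dots,b$, and each vertex $u$ carries an independent copy $\mathcal V_u$ of $\mathcal V$. For a vertex $v$ at depth $d$ with path root $=u_0,u_1,\dots,u_d=v$, where $u_j$ is the $i_j$-th child of $u_{j-1}$, let $W_{j,v}$ be the $i_j$-th component of $\mathcal V_{u_{j-1}}$, and $M_v^n:=n\prod_{j=1}^dW_{j,v}$ (empty product $=1$). $\mu:=b\,\mathbf E(-V\ln V)$. Assumption (A1): $\mathbf P(V=0)=\mathbf P(V=1)=0$ and $-\ln V$ has a non-lattice distribution. *)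

theory Defs
  imports "HOL-Probability.Probability"
begin

definition lattice_law :: "real measure \<Rightarrow> bool" where
  "lattice_law N \<longleftrightarrow>
     (\<exists>a h. h > 0 \<and> (AE x in N. \<exists>z::int. x = a + h * of_int z))"

end

theory Submission
  imports Defs "HOL-Real_Asymp.Real_Asymp"
begin

text \<open>
  Put \<open>X = - ln V\<close> and \<open>S\<^sub>k = X\<^sub>1 + \<dots> + X\<^sub>k\<close>, \<open>t = ln (n / K)\<close>. Then
  \<open>b\<^sup>k P(n W\<^sub>1\<cdots>W\<^sub>k \<ge> K) = b\<^sup>k P(S\<^sub>k \<le> t)\<close>, and multiplying by \<open>e\<^sup>-\<^sup>t\<close> turns this into
  the \<open>k\<close>-th term of the renewal series \<open>\<phi> = \<Sum>\<^sub>k F\<^sup>*\<^sup>k \<star> z\<close> for the exponentially tilted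
  law \<open>F(dx) = b e\<^sup>-\<^sup>x P(X \<in> dx)\<close>, which is a probability law because \<open>b E V = 1\<close>, and for
  \<open>z(s) = e\<^sup>-\<^sup>s\<close> on \<open>s \<ge> 0\<close>. The mean of \<open>F\<close> is \<open>\<mu> = b E(-V ln V)\<close>, so the claim is the
  key renewal theorem \<open>\<phi>(t) \<rightarrow> 1/\<mu>\<close>.

  The series is bounded, and \<open>e\<^sup>t \<phi>(t)\<close> is
  nondecreasing, so \<open>\<phi>\<close> cannot change much on short intervals. Since \<open>F\<close> is non-lattice,
  sums of points of its support are eventually \<open>\<delta>\<close>-dense; together with
  \<open>\<phi> = \<Sum>\<^sub>i\<^sub><\<^sub>k F\<^sup>*\<^sup>i \<star> z + F\<^sup>*\<^sup>k \<star> \<phi>\<close> this forces \<open>\<phi>\<close> to stay close to its limsup (liminf)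
  along whole windows of arbitrary length. Integrating the identity
  \<open>\<integral> (\<Psi>(t) - \<Psi>(t - x)) F(dx) = 1 - e\<^sup>-\<^sup>t\<close> for \<open>\<Psi> = \<Sum>\<^sub>k F\<^sup>*\<^sup>k \<star> (1 - e\<^sup>-\<^sup>s)\<close>, whose increments
  are governed by \<open>\<phi>\<close>, over such windows yields \<open>limsup \<phi> \<cdot> \<mu> \<le> 1 \<le> liminf \<phi> \<cdot> \<mu>\<close>.
\<close>

section \<open>Additive subsets of the reals\<close>

lemma nat_multiple_le_lt:
  fixes d y :: real
  assumes "0 < d" "0 \<le> y"
  obtains m :: nat where "real m * d \<le> y" "y < real m * d + d"
proof
  have "real (nat \<lfloor>y / d\<rfloor>) \<le> y / d"
    using assms by simp
  then show "real (nat \<lfloor>y / d\<rfloor>) * d \<le> y"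
    using assms by (metis pos_le_divide_eq)
  have "y / d < real (nat \<lfloor>y / d\<rfloor>) + 1"
    using assms by linarith
  then show "y < real (nat \<lfloor>y / d\<rfloor>) * d + d"
    using assms by (simp add: field_simps)
qed

lemma frequently_at_top_iff: "frequently P at_top \<longleftrightarrow> (\<forall>s. \<exists>t\<ge>s. P (t::'a::linorder))"
  by (auto simp: frequently_def eventually_at_top_linorder not_le)

lemma int_mult_mem_additive_subgroup:
  fixes G :: "real set"
  assumes zero: "0 \<in> G" and diff: "\<And>x y. x \<in> G \<Longrightarrow> y \<in> G \<Longrightarrow> x - y \<in> G" and "x \<in> G"
  shows "of_int k * x \<in> G"
proof -
  have neg: "- y \<in> G" if "y \<in> G" for y
    using diff[OF zero that] by simp
  have nat_mult: "of_nat n * x \<in> G" for n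
  proof (induction n)
    case (Suc n)
    from diff[OF Suc neg[OF \<open>x \<in> G\<close>]] show ?case by (simp add: distrib_right add.commute)
  qed (simp add: zero)
  show ?thesis
    using nat_mult[of "nat k"] neg[OF nat_mult[of "nat (- k)"]] by (cases "0 \<le> k") auto
qed

lemma Inf_pos_mem_discrete_subgroup:
  fixes G :: "real set"
  assumes diff: "\<And>x y. x \<in> G \<Longrightarrow> y \<in> G \<Longrightarrow> x - y \<in> G"
    and gap: "0 < \<delta>" "\<And>d. d \<in> G \<Longrightarrow> 0 < d \<Longrightarrow> \<delta> \<le> d" and ne: "G \<inter> {0<..} \<noteq> {}"
  shows "Inf (G \<inter> {0<..}) \<in> G"
proof (rule ccontr)
  define h where "h = Inf (G \<inter> {0<..})"
  assume "h \<notin> G"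
  have bdd: "bdd_below (G \<inter> {0<..})" by (rule bdd_belowI[of _ 0]) auto
  then have above: "h < d" if "d \<in> G \<inter> {0<..}" for d
    using cInf_lower[OF that bdd] that \<open>h \<notin> G\<close> by (auto simp: h_def order.order_iff_strict)
  obtain d1 where d1: "d1 \<in> G \<inter> {0<..}" "d1 < h + \<delta>"
    using cInf_lessD[OF ne, of "h + \<delta>"] gap(1) by (auto simp: h_def)
  obtain d2 where d2: "d2 \<in> G \<inter> {0<..}" "d2 < d1"
    using cInf_lessD[OF ne, of d1] above[OF d1(1)] by (auto simp: h_def)
  have "d1 - d2 \<in> G" "0 < d1 - d2" "d1 - d2 < \<delta>"
    using d1 d2 above[OF d2(1)] diff by auto
  then show False using gap(2) by fastforce
qed

lemma discrete_subgroup_real_cyclic: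
  fixes G :: "real set"
  assumes zero: "0 \<in> G" and diff: "\<And>x y. x \<in> G \<Longrightarrow> y \<in> G \<Longrightarrow> x - y \<in> G"
    and gap: "0 < \<delta>" "\<And>d. d \<in> G \<Longrightarrow> 0 < d \<Longrightarrow> \<delta> \<le> d"
  obtains h where "0 < h" "\<And>d. d \<in> G \<Longrightarrow> \<exists>k::int. d = of_int k * h"
proof (cases "G \<inter> {0<..} = {}")
  case True
  have "G \<subseteq> {0}"
  proof
    fix x assume "x \<in> G"
    with True diff[OF zero \<open>x \<in> G\<close>] show "x \<in> {0}"
      by (cases "0 < x") auto
  qed
  then show ?thesis by (intro that[of 1]) (auto intro: exI[of _ 0])
next
  case False
  define h where "h = Inf (G \<inter> {0<..})"
  have h_lower: "d \<in> G \<Longrightarrow> 0 < d \<Longrightarrow> h \<le> d" for d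
    unfolding h_def by (rule cInf_lower) (auto intro: bdd_belowI[of _ 0])
  have "\<delta> \<le> h"
    unfolding h_def by (rule cInf_greatest[OF False]) (auto simp: gap)
  with gap have h_pos: "0 < h" by simp
  have h_in: "h \<in> G"
    unfolding h_def by (rule Inf_pos_mem_discrete_subgroup[OF diff gap False])
  show ?thesis
  proof (rule that[OF h_pos])
    fix d assume "d \<in> G"
    define k where "k = \<lfloor>d / h\<rfloor>"
    have "of_int k \<le> d / h" "d / h < of_int k + 1"
      by (simp_all add: k_def)
    then have "0 \<le> d - of_int k * h" "d - of_int k * h < h"
      using h_pos by (simp_all add: field_simps)
    moreover have "d - of_int k * h \<in> G"
      by (rule diff[OF \<open>d \<in> G\<close> int_mult_mem_additive_subgroup[OF zero diff h_in]])
    ultimately have "d - of_int k * h = 0"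
      using h_lower[of "d - of_int k * h"] by fastforce
    then show "\<exists>k::int. d = of_int k * h" by auto
  qed
qed

lemma nat_mult_mem_additive_monoid:
  fixes S :: "real set"
  assumes "0 \<in> S" "\<And>x y. x \<in> S \<Longrightarrow> y \<in> S \<Longrightarrow> x + y \<in> S" "x \<in> S"
  shows "real n * x \<in> S"
  by (induction n) (use assms in \<open>auto simp: distrib_right\<close>)

text \<open>Far out, \<open>y\<close> is approached from below by some \<open>N v\<close>; trading \<open>m \<le> N\<close> of the summands
  \<open>v\<close> for \<open>p\<close> then moves in steps of \<open>p - v\<close> across the gap \<open>[N v, N v + v)\<close>.\<close>

lemma additive_monoid_approx_beyond:
  fixes S :: "real set"
  assumes zero: "0 \<in> S" and add: "\<And>x y. x \<in> S \<Longrightarrow> y \<in> S \<Longrightarrow> x + y \<in> S"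
    and p: "p \<in> S" and v: "v \<in> S" "0 < v" "v < p" and y: "v * (v / (p - v) + 1) \<le> y"
  shows "\<exists>u\<in>S. \<bar>u - y\<bar> < p - v"
proof -
  define d where "d = p - v"
  have d: "0 < d" using v by (simp add: d_def)
  have "0 \<le> y"
    using y v d by (smt (verit) d_def divide_nonneg_pos mult_nonneg_nonneg)
  then obtain N :: nat where N: "real N * v \<le> y" "y < real N * v + v"
    using nat_multiple_le_lt[OF v(2)] by blast
  then obtain m :: nat where m: "real m * d \<le> y - real N * v" "y - real N * v < real m * d + d"
    using nat_multiple_le_lt[OF d, of "y - real N * v"] by auto
  have "v * (v / d) < v * real N"
    using y N by (simp add: d_def algebra_simps)
  then have "v / d < real N"
    using mult_less_cancel_left_pos[OF v(2)] by blast
  moreover have "real m < v / d"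
    using m N d by (simp add: field_simps)
  ultimately have "m \<le> N" by simp
  then have "real (N - m) * v + real m * p = real N * v + real m * d"
    by (simp add: d_def of_nat_diff algebra_simps)
  moreover have "real (N - m) * v + real m * p \<in> S"
    by (intro add nat_mult_mem_additive_monoid[OF zero add] p v)
  ultimately show ?thesis
    using m by (intro bexI[of _ "real (N - m) * v + real m * p"]) (auto simp: d_def)
qed

lemma additive_monoid_eventually_dense:
  fixes S :: "real set"
  assumes zero: "0 \<in> S" and add: "\<And>x y. x \<in> S \<Longrightarrow> y \<in> S \<Longrightarrow> x + y \<in> S"
    and p: "p \<in> S" and v: "v \<in> S" "0 \<le> v" and gap: "0 < p - v" "p - v < \<delta>"
  shows "\<exists>a. \<forall>y\<ge>a. \<exists>u\<in>S. \<bar>u - y\<bar> < \<delta>"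
proof (cases "v = 0")
  case True
  have "\<exists>u\<in>S. \<bar>u - y\<bar> < \<delta>" if y: "0 \<le> y" for y
  proof -
    have "0 < p" using gap True by simp
    then obtain m :: nat where "real m * p \<le> y" "y < real m * p + p"
      using nat_multiple_le_lt[OF \<open>0 < p\<close> y] by blast
    then show ?thesis
      using nat_mult_mem_additive_monoid[OF zero add p, of m] gap True by (intro bexI[of _ "real m * p"]) auto
  qed
  then show ?thesis by (intro exI[of _ 0]) auto
next
  case False
  with v gap have "0 < v" "v < p" by auto
  have "\<exists>u\<in>S. \<bar>u - y\<bar> < \<delta>" if y: "v * (v / (p - v) + 1) \<le> y" for y
  proof -
    obtain u where "u \<in> S" "\<bar>u - y\<bar> < p - v"
      using additive_monoid_approx_beyond[OF zero add p v(1) \<open>0 < v\<close> \<open>v < p\<close> y] by blast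
    with gap(2) show ?thesis by force
  qed
  then show ?thesis by (intro exI[of _ "v * (v / (p - v) + 1)"]) auto
qed

section \<open>Convolution with the tilted law\<close>

locale tilted_renewal = prob_space rho for rho :: "real measure" +
  fixes b :: real
  assumes sets_rho[measurable_cong]: "sets rho = sets borel"
    and AE_pos: "AE x in rho. x > 0"
    and b_ge_1: "b \<ge> 1"
    and integral_tilt_eq_1: "(\<integral>x. b * exp (-x) \<partial>rho) = 1"
begin

text \<open>\<open>rho\<close> is the law of \<open>X = - ln V\<close>, \<open>tilt\<close> the density of \<open>F\<close> with respect to \<open>rho\<close>,
  and \<open>conv h = F \<star> h\<close>.\<close>

definition tilt :: "real \<Rightarrow> real" where "tilt x = b * exp (-x)"

definition conv :: "(real \<Rightarrow> real) \<Rightarrow> real \<Rightarrow> real" where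
  "conv h t = (\<integral>x. tilt x * h (t - x) \<partial>rho)"

definition conv_iter :: "nat \<Rightarrow> (real \<Rightarrow> real) \<Rightarrow> real \<Rightarrow> real" where
  "conv_iter k h = (conv ^^ k) h"

definition bdd_meas :: "(real \<Rightarrow> real) \<Rightarrow> real \<Rightarrow> bool" where
  "bdd_meas h B \<longleftrightarrow> h \<in> borel_measurable borel \<and> (\<forall>s. \<bar>h s\<bar> \<le> B)"

lemma space_rho: "space rho = UNIV"
  using sets_eq_imp_space_eq[OF sets_rho] by simp

lemma borel_measurable_rho_iff: "(f::real\<Rightarrow>real) \<in> borel_measurable rho \<longleftrightarrow> f \<in> borel_measurable borel"
  by (subst measurable_cong_sets[OF sets_rho refl]) simp

lemma tilt_measurable[measurable]: "tilt \<in> borel_measurable borel"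
  unfolding tilt_def by measurable

lemma tilt_pos: "tilt x > 0"
  using b_ge_1 by (simp add: tilt_def)

lemma AE_tilt_le: "AE x in rho. tilt x \<le> b"
  using AE_pos by eventually_elim (use b_ge_1 in \<open>auto simp: tilt_def\<close>)

lemma integral_tilt: "(\<integral>x. tilt x \<partial>rho) = 1"
  using integral_tilt_eq_1 by (simp add: tilt_def)

lemma integrable_tilt_mult:
  assumes [measurable]: "f \<in> borel_measurable borel" and "\<And>x. x > 0 \<Longrightarrow> \<bar>f x\<bar> \<le> B"
  shows "integrable rho (\<lambda>x. tilt x * f x)"
proof (rule integrable_const_bound[where B="b * B"])
  show "AE x in rho. norm (tilt x * f x) \<le> b * B"
    using AE_tilt_le AE_pos
  proof eventually_elim
    case (elim x)
    then show ?case
      using assms(2)[of x] tilt_pos[of x] by (simp add: abs_mult) (intro mult_mono, auto)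
  qed
qed (simp add: borel_measurable_rho_iff)

lemma integrable_tilt: "integrable rho tilt"
  using integrable_tilt_mult[of "\<lambda>_. 1" 1] by simp

lemma integrable_conv:
  assumes "h \<in> borel_measurable borel" and "\<And>s. s \<le> t \<Longrightarrow> \<bar>h s\<bar> \<le> B"
  shows "integrable rho (\<lambda>x. tilt x * h (t - x))"
  using assms by (intro integrable_tilt_mult[where B=B]) auto

lemma conv_measurable:
  assumes [measurable]: "h \<in> borel_measurable borel"
  shows "conv h \<in> borel_measurable borel"
proof -
  have "sets (borel \<Otimes>\<^sub>M rho) = sets (borel \<Otimes>\<^sub>M (borel :: real measure))"
    by (rule sets_pair_measure_cong) (auto simp: sets_rho)
  moreover have "(\<lambda>(t, x). tilt x * h (t - x)) \<in> borel_measurable (borel \<Otimes>\<^sub>M borel)"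
    by measurable
  ultimately have "(\<lambda>(t, x). tilt x * h (t - x)) \<in> borel_measurable (borel \<Otimes>\<^sub>M rho)"
    using measurable_cong_sets by blast
  then show ?thesis
    unfolding conv_def by (rule borel_measurable_lebesgue_integral)
qed

lemma conv_mono_upto:
  assumes "h1 \<in> borel_measurable borel" "\<And>s. s \<le> t \<Longrightarrow> \<bar>h1 s\<bar> \<le> B1"
    and "h2 \<in> borel_measurable borel" "\<And>s. s \<le> t \<Longrightarrow> \<bar>h2 s\<bar> \<le> B2"
    and le: "\<And>s. s \<le> t \<Longrightarrow> h1 s \<le> h2 s"
  shows "conv h1 t \<le> conv h2 t"
  unfolding conv_def
proof (rule integral_mono_AE[OF integrable_conv[OF assms(1,2)] integrable_conv[OF assms(3,4)]])
  show "AE x in rho. tilt x * h1 (t - x) \<le> tilt x * h2 (t - x)"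
    using AE_pos by eventually_elim (use le tilt_pos in \<open>auto intro!: mult_left_mono less_imp_le\<close>)
qed

lemma conv_const: "conv (\<lambda>s. c) t = c"
  unfolding conv_def using integral_tilt by simp

lemma conv_abs_le:
  assumes "bdd_meas h B" shows "\<bar>conv h t\<bar> \<le> B"
proof -
  have h: "h \<in> borel_measurable borel" "\<And>s. \<bar>h s\<bar> \<le> B"
    using assms by (auto simp: bdd_meas_def)
  have "0 \<le> B" "- B \<le> h s" "h s \<le> B" for s
    using h(2)[of 0] h(2)[of s] by (auto simp: abs_le_iff)
  note h = h this
  have "conv h t \<le> conv (\<lambda>s. B) t"
    by (rule conv_mono_upto[of _ t B _ B]) (use h in \<open>auto simp: abs_le_iff\<close>)
  moreover have "conv (\<lambda>s. - B) t \<le> conv h t"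
    by (rule conv_mono_upto[of _ t B _ B]) (use h in \<open>auto simp: abs_le_iff\<close>)
  ultimately show ?thesis by (simp add: conv_const abs_le_iff)
qed

lemma conv_cmult: "conv (\<lambda>s. c * h s) t = c * conv h t"
  unfolding conv_def by (simp add: mult.left_commute)

lemma conv_shift: "conv (\<lambda>s. h (s + c)) t = conv h (t + c)"
  unfolding conv_def by (simp add: algebra_simps)

lemma conv_zero_neg: "(\<And>s. s < 0 \<Longrightarrow> h s = 0) \<Longrightarrow> t < 0 \<Longrightarrow> conv h t = 0"
  unfolding conv_def
  by (rule integral_eq_zero_AE) (use AE_pos in \<open>auto elim!: eventually_mono\<close>)

lemma conv_iter_0[simp]: "conv_iter 0 h = h"
  by (simp add: conv_iter_def)

lemma conv_iter_Suc: "conv_iter (Suc k) h = conv (conv_iter k h)"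
  by (simp add: conv_iter_def)

lemma conv_iter_Suc': "conv_iter (Suc k) h = conv_iter k (conv h)"
  by (simp add: conv_iter_def funpow_swap1)

lemma bdd_measD: "bdd_meas h B \<Longrightarrow> h \<in> borel_measurable borel" "bdd_meas h B \<Longrightarrow> \<bar>h s\<bar> \<le> B"
  by (auto simp: bdd_meas_def)

lemma bdd_measI: "h \<in> borel_measurable borel \<Longrightarrow> (\<And>s. \<bar>h s\<bar> \<le> B) \<Longrightarrow> bdd_meas h B"
  by (auto simp: bdd_meas_def)

lemma bdd_meas_const: "bdd_meas (\<lambda>s. c) \<bar>c\<bar>"
  by (simp add: bdd_meas_def)

lemma bdd_meas_shift: "bdd_meas h B \<Longrightarrow> bdd_meas (\<lambda>u. h (u - c)) B"
  unfolding bdd_meas_def by auto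

lemma bdd_meas_diff: "bdd_meas h1 B1 \<Longrightarrow> bdd_meas h2 B2 \<Longrightarrow> bdd_meas (\<lambda>s. h1 s - h2 s) (B1 + B2)"
  unfolding bdd_meas_def by (auto intro!: order.trans[OF abs_triangle_ineq4] add_mono)

lemma bdd_meas_sum:
  "finite F \<Longrightarrow> (\<And>m. m \<in> F \<Longrightarrow> bdd_meas (h m) (B m)) \<Longrightarrow> bdd_meas (\<lambda>s. \<Sum>m\<in>F. h m s) (\<Sum>m\<in>F. B m)"
  unfolding bdd_meas_def by (auto intro!: borel_measurable_sum order.trans[OF sum_abs] sum_mono)

lemma bdd_meas_conv: "bdd_meas h B \<Longrightarrow> bdd_meas (conv h) B"
  by (auto simp: bdd_meas_def intro!: conv_measurable conv_abs_le)

lemma bdd_meas_conv_iter: "bdd_meas h B \<Longrightarrow> bdd_meas (conv_iter k h) B"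
  by (induction k) (auto simp: conv_iter_Suc intro!: bdd_meas_conv)

lemma integrable_conv_bdd_meas: "bdd_meas h B \<Longrightarrow> integrable rho (\<lambda>x. tilt x * h (t - x))"
  by (rule integrable_conv[where B=B]) (auto simp: bdd_meas_def)

lemma conv_mono: "bdd_meas h1 B1 \<Longrightarrow> bdd_meas h2 B2 \<Longrightarrow> (\<And>s. s \<le> t \<Longrightarrow> h1 s \<le> h2 s) \<Longrightarrow> conv h1 t \<le> conv h2 t"
  by (rule conv_mono_upto) (auto simp: bdd_meas_def)

lemma conv_add: "bdd_meas h1 B1 \<Longrightarrow> bdd_meas h2 B2 \<Longrightarrow> conv (\<lambda>s. h1 s + h2 s) = (\<lambda>s. conv h1 s + conv h2 s)"
  by (auto simp: conv_def fun_eq_iff distrib_left integrable_conv_bdd_meas)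

lemma conv_diff: "bdd_meas h1 B1 \<Longrightarrow> bdd_meas h2 B2 \<Longrightarrow> conv (\<lambda>s. h1 s - h2 s) = (\<lambda>s. conv h1 s - conv h2 s)"
  by (auto simp: conv_def fun_eq_iff right_diff_distrib integrable_conv_bdd_meas)

lemma conv_iter_add:
  "bdd_meas h1 B1 \<Longrightarrow> bdd_meas h2 B2 \<Longrightarrow> conv_iter k (\<lambda>s. h1 s + h2 s) = (\<lambda>s. conv_iter k h1 s + conv_iter k h2 s)"
  by (induction k) (simp_all add: conv_iter_Suc conv_add[OF bdd_meas_conv_iter bdd_meas_conv_iter])

lemma conv_iter_diff:
  "bdd_meas h1 B1 \<Longrightarrow> bdd_meas h2 B2 \<Longrightarrow> conv_iter k (\<lambda>s. h1 s - h2 s) = (\<lambda>s. conv_iter k h1 s - conv_iter k h2 s)"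
  by (induction k) (simp_all add: conv_iter_Suc conv_diff[OF bdd_meas_conv_iter bdd_meas_conv_iter])

lemma conv_iter_cmult: "conv_iter k (\<lambda>s. c * h s) = (\<lambda>s. c * conv_iter k h s)"
  by (induction k) (simp_all add: conv_iter_Suc conv_cmult[abs_def])

lemma conv_iter_const: "conv_iter k (\<lambda>s. c) = (\<lambda>s. c)"
  by (induction k) (simp_all add: conv_iter_Suc conv_const[abs_def])

lemma conv_iter_shift: "conv_iter k (\<lambda>s. h (s + c)) = (\<lambda>t. conv_iter k h (t + c))"
  by (induction k) (simp_all add: conv_iter_Suc conv_shift[abs_def])

lemma conv_iter_shift': "conv_iter k (\<lambda>s. h (s - c)) = (\<lambda>t. conv_iter k h (t - c))"
  using conv_iter_shift[of k h "- c"] by simp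

lemma conv_iter_sum:
  assumes "finite F" "\<And>m. m \<in> F \<Longrightarrow> bdd_meas (h m) (B m)"
  shows "conv_iter k (\<lambda>s. \<Sum>m\<in>F. h m s) = (\<lambda>s. \<Sum>m\<in>F. conv_iter k (h m) s)"
  using assms
proof (induction F rule: finite_induct)
  case empty
  then show ?case using conv_iter_const[of k 0] by simp
next
  case (insert a F)
  then have "conv_iter k (\<lambda>s. h a s + (\<Sum>m\<in>F. h m s)) = (\<lambda>s. conv_iter k (h a) s + conv_iter k (\<lambda>s. \<Sum>m\<in>F. h m s) s)"
    by (intro conv_iter_add[of "h a" "B a" _ "\<Sum>m\<in>F. B m"] bdd_meas_sum) auto
  with insert show ?case by simp
qed

lemma conv_iter_mono:
  "bdd_meas h1 B1 \<Longrightarrow> bdd_meas h2 B2 \<Longrightarrow> (\<And>s. h1 s \<le> h2 s) \<Longrightarrow> conv_iter k h1 t \<le> conv_iter k h2 t"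
  by (induction k arbitrary: t) (simp_all add: conv_iter_Suc conv_mono[OF bdd_meas_conv_iter bdd_meas_conv_iter])

lemma conv_iter_nonneg: "bdd_meas h B \<Longrightarrow> (\<And>s. 0 \<le> h s) \<Longrightarrow> 0 \<le> conv_iter k h t"
  using conv_iter_mono[OF bdd_meas_const[of 0], of h B k t] conv_iter_const[of k 0] by simp

lemma mono_conv:
  assumes "bdd_meas h B" "mono h" shows "mono (conv h)"
proof (rule monoI)
  fix t t' :: real assume "t \<le> t'"
  then have "tilt x * h (t - x) \<le> tilt x * h (t' - x)" for x
    by (intro mult_left_mono monoD[OF assms(2)] less_imp_le[OF tilt_pos]) simp
  then show "conv h t \<le> conv h t'"
    unfolding conv_def by (intro integral_mono integrable_conv_bdd_meas[OF assms(1)])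
qed

lemma mono_conv_iter: "bdd_meas h B \<Longrightarrow> mono h \<Longrightarrow> mono (conv_iter k h)"
  by (induction k) (auto simp: conv_iter_Suc intro!: mono_conv bdd_meas_conv_iter)

lemma conv_iter_zero_neg:
  "bdd_meas h B \<Longrightarrow> (\<And>s. s < 0 \<Longrightarrow> h s = 0) \<Longrightarrow> t < 0 \<Longrightarrow> conv_iter k h t = 0"
  by (induction k arbitrary: t) (simp_all add: conv_iter_Suc conv_zero_neg)

definition exp_moment :: real where "exp_moment = (\<integral>x. tilt x * exp (-x) \<partial>rho)"

lemma integrable_tilt_exp: "integrable rho (\<lambda>x. tilt x * exp (-x))"
  by (rule integrable_tilt_mult[where B=1]) auto

lemma exp_moment_less_1: "exp_moment < 1"
proof -
  have "exp_moment < (\<integral>x. tilt x \<partial>rho)"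
    unfolding exp_moment_def
  proof (rule integral_less_AE_space[OF integrable_tilt_exp integrable_tilt])
    show "AE x in rho. tilt x * exp (-x) < tilt x"
      using AE_pos by eventually_elim (use tilt_pos in auto)
  qed (simp add: emeasure_space_1)
  then show ?thesis using integral_tilt by simp
qed

lemma exp_moment_nonneg: "0 \<le> exp_moment"
  unfolding exp_moment_def by (intro integral_nonneg_AE AE_I2) (use tilt_pos in \<open>auto intro: less_imp_le\<close>)

lemma conv_le_exp:
  assumes h: "bdd_meas h B" and le: "\<And>s. h s \<le> c * exp s"
  shows "conv h t \<le> c * exp t * exp_moment"
proof -
  have "conv h t \<le> conv (\<lambda>s. c * exp s) t"
    by (rule conv_mono_upto[of h t B _ "\<bar>c\<bar> * exp t"])
       (use h le in \<open>auto simp: bdd_meas_def abs_mult intro: mult_left_mono\<close>)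
  also have "conv (\<lambda>s. c * exp s) t = (\<integral>x. (c * exp t) * (tilt x * exp (-x)) \<partial>rho)"
    unfolding conv_def by (intro Bochner_Integration.integral_cong refl) (auto simp: exp_diff exp_minus field_simps)
  finally show ?thesis
    unfolding exp_moment_def by simp
qed

lemma conv_iter_le_exp:
  assumes h: "bdd_meas h B" and le: "\<And>s. h s \<le> c * exp s"
  shows "conv_iter k h t \<le> c * exp_moment ^ k * exp t"
proof (induction k arbitrary: t)
  case 0
  then show ?case using le by simp
next
  case (Suc k)
  have "conv_iter (Suc k) h t \<le> (c * exp_moment ^ k) * exp t * exp_moment"
    unfolding conv_iter_Suc
    by (rule conv_le_exp[OF bdd_meas_conv_iter[OF h]]) (use Suc in \<open>simp add: mult.commute\<close>)
  then show ?case by (simp add: mult_ac)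
qed

lemma conv_le_exp_neg:
  assumes h: "bdd_meas h B" and le: "\<And>s. h s \<le> c * exp (- s)"
  shows "conv h t \<le> b * c * exp (- t)"
proof -
  have "conv h t \<le> (\<integral>x. b * c * exp (- t) \<partial>rho)"
    unfolding conv_def
  proof (rule integral_mono[OF integrable_conv_bdd_meas[OF h]])
    show "tilt x * h (t - x) \<le> b * c * exp (- t)" for x
      using mult_left_mono[OF le[of "t - x"] less_imp_le[OF tilt_pos[of x]]]
      by (simp add: tilt_def exp_diff exp_minus field_simps)
  qed simp
  then show ?thesis by (simp add: prob_space)
qed

lemma conv_iter_le_exp_neg:
  assumes h: "bdd_meas h B" and le: "\<And>s. h s \<le> c * exp (- s)"
  shows "conv_iter k h t \<le> b ^ k * c * exp (- t)"
proof (induction k arbitrary: t)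
  case 0
  then show ?case using le by simp
next
  case (Suc k)
  have "conv_iter (Suc k) h t \<le> b * (b ^ k * c) * exp (- t)"
    unfolding conv_iter_Suc by (rule conv_le_exp_neg[OF bdd_meas_conv_iter[OF h]]) (use Suc in simp)
  then show ?case by (simp add: mult_ac)
qed

lemma summable_exp_moment_geometric: "summable (\<lambda>k. exp_moment ^ k * exp t)"
  using exp_moment_less_1 exp_moment_nonneg by (intro summable_mult2 summable_geometric) auto

definition conv_series :: "(real \<Rightarrow> real) \<Rightarrow> real \<Rightarrow> real" where
  "conv_series h t = (\<Sum>k. conv_iter k h t)"

context
  fixes h :: "real \<Rightarrow> real"
  assumes h_bdd_meas: "bdd_meas h 1" and h_nonneg: "\<And>s. 0 \<le> h s" and h_le_exp: "\<And>s. h s \<le> exp s"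
begin

lemma summable_conv_iter: "summable (\<lambda>k. conv_iter k h t)"
  by (rule summable_comparison_test'[OF summable_exp_moment_geometric[of t], of 0])
     (use conv_iter_le_exp[OF h_bdd_meas, of 1] h_le_exp conv_iter_nonneg[OF h_bdd_meas h_nonneg] in auto)

lemma conv_series_nonneg: "0 \<le> conv_series h t"
  unfolding conv_series_def by (intro suminf_nonneg summable_conv_iter conv_iter_nonneg[OF h_bdd_meas h_nonneg])

lemma conv_series_le: "conv_series h t \<le> exp t / (1 - exp_moment)"
proof -
  have "conv_series h t \<le> (\<Sum>k. exp_moment ^ k * exp t)"
    unfolding conv_series_def
    by (intro suminf_le summable_conv_iter summable_exp_moment_geometric)
       (use conv_iter_le_exp[OF h_bdd_meas, of 1] h_le_exp in auto)
  also have "\<dots> = exp t / (1 - exp_moment)"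
    using exp_moment_less_1 exp_moment_nonneg
    by (simp add: suminf_mult2[symmetric, OF summable_geometric] suminf_geometric)
  finally show ?thesis .
qed

lemma conv_series_measurable: "conv_series h \<in> borel_measurable borel"
proof -
  have "(\<lambda>t. \<Sum>k. conv_iter k h t) \<in> borel_measurable borel"
    by (intro borel_measurable_suminf bdd_measD(1)[OF bdd_meas_conv_iter[OF h_bdd_meas]])
  then show ?thesis by (simp add: conv_series_def[abs_def])
qed

lemma conv_series_renewal_eq: "conv_series h t = h t + conv (conv_series h) t"
proof -
  have int: "integrable rho (\<lambda>x. tilt x * conv_iter k h (t - x))" for k
    by (rule integrable_conv_bdd_meas[OF bdd_meas_conv_iter[OF h_bdd_meas]])
  have "conv (conv_series h) t = (\<integral>x. (\<Sum>k. tilt x * conv_iter k h (t - x)) \<partial>rho)"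
    unfolding conv_def conv_series_def
    by (intro Bochner_Integration.integral_cong refl suminf_mult[symmetric] summable_conv_iter)
  also have "\<dots> = (\<Sum>k. (\<integral>x. tilt x * conv_iter k h (t - x) \<partial>rho))"
  proof (rule integral_suminf[OF int])
    show "AE x in rho. summable (\<lambda>k. norm (tilt x * conv_iter k h (t - x)))"
      using tilt_pos conv_iter_nonneg[OF h_bdd_meas h_nonneg]
      by (auto intro!: AE_I2 summable_mult summable_conv_iter simp: abs_mult)
    have "summable (\<lambda>k. conv_iter (Suc k) h t)"
      using summable_conv_iter[of t] by (subst summable_Suc_iff)
    then show "summable (\<lambda>k. \<integral>x. norm (tilt x * conv_iter k h (t - x)) \<partial>rho)"
      using tilt_pos conv_iter_nonneg[OF h_bdd_meas h_nonneg]
      by (simp add: abs_mult conv_iter_Suc conv_def abs_of_nonneg less_imp_le)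
  qed
  also have "\<dots> = (\<Sum>k. conv_iter (Suc k) h t)"
    by (simp add: conv_iter_Suc conv_def)
  also have "\<dots> = conv_series h t - h t"
    unfolding conv_series_def using suminf_split_head[OF summable_conv_iter[of t]] by simp
  finally show ?thesis by simp
qed

end

section \<open>Boundedness of the renewal series\<close>

definition exp_density :: "real \<Rightarrow> real" where "exp_density s = (if 0 \<le> s then exp (-s) else 0)"
definition exp_cdf :: "real \<Rightarrow> real" where "exp_cdf s = (if 0 \<le> s then 1 - exp (-s) else 0)"
definition heaviside :: "real \<Rightarrow> real" where "heaviside s = (if 0 \<le> s then 1 else 0)"

text \<open>\<open>tilted_cdf k\<close> is the distribution function of \<open>F\<^sup>*\<^sup>k\<close>; \<open>phi\<close> and \<open>Psi\<close> are the
  renewal measure \<open>\<Sum>\<^sub>k F\<^sup>*\<^sup>k\<close> convolved with the exponential density and distribution function.\<close>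

definition tilted_cdf :: "nat \<Rightarrow> real \<Rightarrow> real" where "tilted_cdf k = conv_iter k heaviside"
definition phi :: "real \<Rightarrow> real" where "phi = conv_series exp_density"
definition Psi :: "real \<Rightarrow> real" where "Psi = conv_series exp_cdf"

lemma exp_density_measurable[measurable]: "exp_density \<in> borel_measurable borel"
  unfolding exp_density_def by measurable

lemma exp_cdf_measurable[measurable]: "exp_cdf \<in> borel_measurable borel"
  unfolding exp_cdf_def by measurable

lemma heaviside_measurable[measurable]: "heaviside \<in> borel_measurable borel"
  unfolding heaviside_def by measurable

lemma exp_density_nonneg: "0 \<le> exp_density s" and exp_density_le_1: "exp_density s \<le> 1"
  by (simp_all add: exp_density_def)

lemma exp_cdf_nonneg: "0 \<le> exp_cdf s" and exp_cdf_le_1: "exp_cdf s \<le> 1"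
  by (simp_all add: exp_cdf_def)

lemma bdd_meas_exp_density: "bdd_meas exp_density 1"
  by (rule bdd_measI) (auto simp: exp_density_def)

lemma bdd_meas_exp_cdf: "bdd_meas exp_cdf 1"
  by (rule bdd_measI) (auto simp: exp_cdf_def)

lemma bdd_meas_heaviside: "bdd_meas heaviside 1"
  by (rule bdd_measI) (auto simp: heaviside_def)

lemma exp_density_le_exp: "exp_density s \<le> exp s"
  by (simp add: exp_density_def)

lemma exp_cdf_le_exp: "exp_cdf s \<le> exp s"
  unfolding exp_cdf_def by (smt (verit) exp_ge_zero one_le_exp_iff)

lemmas exp_density_series_facts = bdd_meas_exp_density exp_density_nonneg exp_density_le_exp
lemmas exp_cdf_series_facts = bdd_meas_exp_cdf exp_cdf_nonneg exp_cdf_le_exp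

lemma mono_heaviside: "mono heaviside"
  by (auto simp: mono_def heaviside_def)

lemma bdd_meas_tilted_cdf: "bdd_meas (tilted_cdf k) 1"
  unfolding tilted_cdf_def by (rule bdd_meas_conv_iter[OF bdd_meas_heaviside])

lemma mono_tilted_cdf: "mono (tilted_cdf k)"
  unfolding tilted_cdf_def by (rule mono_conv_iter[OF bdd_meas_heaviside mono_heaviside])

lemma tilted_cdf_nonneg: "0 \<le> tilted_cdf k t"
  unfolding tilted_cdf_def by (rule conv_iter_nonneg[OF bdd_meas_heaviside]) (simp add: heaviside_def)

lemma tilted_cdf_le_1: "tilted_cdf k t \<le> 1"
  using bdd_measD(2)[OF bdd_meas_tilted_cdf, of k t] by simp

lemma tilted_cdf_neg: "t < 0 \<Longrightarrow> tilted_cdf k t = 0"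
  unfolding tilted_cdf_def by (rule conv_iter_zero_neg[OF bdd_meas_heaviside]) (auto simp: heaviside_def)

lemma tilted_cdf_0: "tilted_cdf 0 = heaviside"
  by (simp add: tilted_cdf_def)

lemma tilted_cdf_Suc: "tilted_cdf (Suc k) t = (\<integral>x. tilt x * tilted_cdf k (t - x) \<partial>rho)"
  by (simp add: tilted_cdf_def conv_iter_Suc conv_def)

lemma conv_iter_heaviside_shift: "conv_iter k (\<lambda>s. heaviside (s - c)) = (\<lambda>t. tilted_cdf k (t - c))"
  by (simp add: conv_iter_shift' tilted_cdf_def)

definition tail_prob :: "real \<Rightarrow> real" where
  "tail_prob \<delta> = (\<integral>x. tilt x * indicator {\<delta><..} x \<partial>rho)"

lemma integrable_tilt_indicator: "integrable rho (\<lambda>x. tilt x * indicator A x)" if "A \<in> sets borel"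
  by (rule integrable_tilt_mult[where B=1]) (use that in auto)

lemma tail_prob_pos:
  assumes "emeasure rho {\<delta><..} \<noteq> 0" shows "0 < tail_prob \<delta>"
proof -
  have "(\<integral>x. 0 \<partial>rho) < tail_prob \<delta>"
    unfolding tail_prob_def
  proof (rule integral_less_AE[where A="{\<delta><..}"])
    show "AE x in rho. x \<in> {\<delta><..} \<longrightarrow> 0 \<noteq> tilt x * indicator {\<delta><..} x"
      using tilt_pos by (auto intro!: AE_I2 simp: less_imp_neq)
    show "AE x in rho. 0 \<le> tilt x * indicator {\<delta><..} x"
      using tilt_pos by (auto intro!: AE_I2 simp: less_imp_le)
  qed (use assms integrable_tilt_indicator in \<open>auto simp: sets_rho\<close>)
  then show ?thesis by simp
qed

lemma exists_tail_prob_pos: "\<exists>\<delta>>0. tail_prob \<delta> > 0"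
proof (rule ccontr)
  assume "\<not> ?thesis"
  then have "\<And>n. {1 / Suc n <..} \<in> null_sets rho"
    using tail_prob_pos by (force simp: null_sets_def sets_rho)
  then have null: "(\<Union>n. {1 / real (Suc n) <..}) \<in> null_sets rho"
    by blast
  have "x \<in> (\<Union>n. {1 / real (Suc n) <..})" if "0 < x" for x :: real
    using that by (auto dest: nat_approx_posE)
  then have "AE x in rho. \<not> 0 < x"
    by (intro AE_I'[OF null]) auto
  with AE_pos have "AE x in rho. False" by eventually_elim auto
  then show False by (simp add: AE_False emeasure_space_1)
qed

lemma tilted_cdf_Suc_le:
  "tilted_cdf (Suc k) t \<le> tilted_cdf k t - tail_prob \<delta> * (tilted_cdf k t - tilted_cdf k (t - \<delta>))"
proof -
  define d where "d = tilted_cdf k t - tilted_cdf k (t - \<delta>)"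
  have "tilted_cdf (Suc k) t \<le> (\<integral>x. tilted_cdf k t * tilt x - d * (tilt x * indicator {\<delta><..} x) \<partial>rho)"
    unfolding tilted_cdf_Suc
  proof (rule integral_mono_AE)
    show "integrable rho (\<lambda>x. tilt x * tilted_cdf k (t - x))"
      by (rule integrable_conv_bdd_meas[OF bdd_meas_tilted_cdf])
    show "integrable rho (\<lambda>x. tilted_cdf k t * tilt x - d * (tilt x * indicator {\<delta><..} x))"
      using integrable_tilt integrable_tilt_indicator by auto
    show "AE x in rho. tilt x * tilted_cdf k (t - x) \<le> tilted_cdf k t * tilt x - d * (tilt x * indicator {\<delta><..} x)"
      using AE_pos
    proof eventually_elim
      case (elim x)
      have "tilted_cdf k (t - x) \<le> tilted_cdf k t - d * indicator {\<delta><..} x"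
        using elim by (cases "\<delta> < x") (auto simp: d_def intro!: monoD[OF mono_tilted_cdf])
      then have "tilt x * tilted_cdf k (t - x) \<le> tilt x * (tilted_cdf k t - d * indicator {\<delta><..} x)"
        using tilt_pos[of x] by (intro mult_left_mono) auto
      then show ?case by (simp add: algebra_simps)
    qed
  qed
  also have "\<dots> = tilted_cdf k t - d * tail_prob \<delta>"
    using integrable_tilt integrable_tilt_indicator integral_tilt by (simp add: tail_prob_def)
  finally show ?thesis by (simp add: d_def mult.commute)
qed

lemma tail_prob_mult_sum_tilted_cdf_le:
  "tail_prob \<delta> * (\<Sum>k<N. tilted_cdf k s - tilted_cdf k (s - \<delta>)) \<le> 1 - tilted_cdf N s"
proof (induction N)
  case 0
  then show ?case using tilted_cdf_le_1[of 0 s] by simp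
next
  case (Suc N)
  then show ?case
    using tilted_cdf_Suc_le[of N s \<delta>] by (simp add: distrib_left)
qed

text \<open>The renewal measure \<open>\<Sum>\<^sub>k F\<^sup>*\<^sup>k\<close> of an interval of length \<open>\<delta>\<close> is at most \<open>1 / tail_prob \<delta>\<close>.\<close>

lemma sum_tilted_cdf_increments_le:
  "0 < tail_prob \<delta> \<Longrightarrow> (\<Sum>k<N. tilted_cdf k s - tilted_cdf k (s - \<delta>)) \<le> 1 / tail_prob \<delta>"
  using tail_prob_mult_sum_tilted_cdf_le[where \<delta>=\<delta> and N=N and s=s] tilted_cdf_nonneg[of N s]
  by (simp add: field_simps mult.commute)

text \<open>A staircase majorant of \<open>exp_density\<close>, built from shifted \<open>heaviside\<close> steps so that its
  convolution powers are explicit in terms of \<open>tilted_cdf\<close>.\<close>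

definition stair :: "real \<Rightarrow> nat \<Rightarrow> real \<Rightarrow> real" where
  "stair \<delta> m s = exp (- (real m * \<delta>)) * (heaviside (s - real m * \<delta>) - heaviside (s - (real m * \<delta> + \<delta>)))"

definition step_majorant :: "real \<Rightarrow> nat \<Rightarrow> real \<Rightarrow> real" where
  "step_majorant \<delta> M s = (\<Sum>m<M. stair \<delta> m s) + heaviside (s - real M * \<delta>)"

lemma stair_measurable[measurable]: "stair \<delta> m \<in> borel_measurable borel"
  unfolding stair_def by measurable

lemma stair_nonneg: "0 < \<delta> \<Longrightarrow> 0 \<le> stair \<delta> m s"
  by (auto simp: stair_def heaviside_def)

lemma bdd_meas_stair: "0 < \<delta> \<Longrightarrow> bdd_meas (stair \<delta> m) 1"
  by (rule bdd_measI) (auto simp: stair_def heaviside_def abs_mult)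

lemma bdd_meas_step_majorant:
  assumes "0 < \<delta>" shows "bdd_meas (step_majorant \<delta> M) (real M + 1)"
proof -
  have "bdd_meas (\<lambda>s. \<Sum>m<M. stair \<delta> m s) (\<Sum>m<M. 1)"
    by (rule bdd_meas_sum) (auto intro: bdd_meas_stair assms)
  then have S: "\<bar>\<Sum>m<M. stair \<delta> m s\<bar> \<le> real M" for s
    by (auto simp: bdd_meas_def)
  show ?thesis
  proof (rule bdd_measI)
    show "\<bar>step_majorant \<delta> M s\<bar> \<le> real M + 1" for s
      using S[of s] unfolding step_majorant_def heaviside_def by (simp add: abs_le_iff)
  qed (simp add: step_majorant_def[abs_def])
qed

lemma exp_density_le_step_majorant:
  assumes "0 < \<delta>" shows "exp_density s \<le> step_majorant \<delta> M s"
proof -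
  have sum_nonneg: "0 \<le> (\<Sum>m<M. stair \<delta> m s)"
    by (intro sum_nonneg stair_nonneg assms)
  consider "s < 0" | "real M * \<delta> \<le> s" | "0 \<le> s" "s < real M * \<delta>" by linarith
  then show ?thesis
  proof cases
    case 3
    obtain m :: nat where m: "real m * \<delta> \<le> s" "s < real m * \<delta> + \<delta>"
      using nat_multiple_le_lt[OF assms 3(1)] .
    with 3 have "m < M"
      using assms by (metis not_less mult_right_mono of_nat_le_iff order.strict_trans1 less_imp_le)
    have "exp_density s \<le> stair \<delta> m s"
      using m 3 by (simp add: exp_density_def stair_def heaviside_def)
    also have "\<dots> \<le> (\<Sum>m<M. stair \<delta> m s)"
      by (rule member_le_sum) (use \<open>m < M\<close> stair_nonneg assms in auto)
    finally show ?thesis by (simp add: step_majorant_def heaviside_def)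
  next
    case 2
    then have "exp_density s \<le> 1"
      by (simp add: exp_density_le_1)
    with 2 sum_nonneg show ?thesis
      using assms by (simp add: step_majorant_def heaviside_def)
  qed (use sum_nonneg in \<open>simp add: exp_density_def step_majorant_def heaviside_def\<close>)
qed

lemma conv_iter_step_majorant:
  assumes "0 < \<delta>"
  shows "conv_iter k (step_majorant \<delta> M) t =
    (\<Sum>m<M. exp (- (real m * \<delta>)) * (tilted_cdf k (t - real m * \<delta>) - tilted_cdf k (t - real m * \<delta> - \<delta>)))
      + tilted_cdf k (t - real M * \<delta>)"
proof -
  have stair: "conv_iter k (stair \<delta> m) = (\<lambda>t. exp (- (real m * \<delta>)) *
      (tilted_cdf k (t - real m * \<delta>) - tilted_cdf k (t - real m * \<delta> - \<delta>)))" for m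
    unfolding stair_def[abs_def]
    by (simp add: conv_iter_cmult conv_iter_diff[OF bdd_meas_shift bdd_meas_shift, OF bdd_meas_heaviside bdd_meas_heaviside]
        conv_iter_heaviside_shift diff_diff_eq)
  have "conv_iter k (step_majorant \<delta> M) =
      (\<lambda>t. conv_iter k (\<lambda>s. \<Sum>m<M. stair \<delta> m s) t + tilted_cdf k (t - real M * \<delta>))"
    unfolding step_majorant_def[abs_def]
    by (simp add: conv_iter_add[OF bdd_meas_sum[of "{..<M}" _ "\<lambda>_. 1"] bdd_meas_shift[OF bdd_meas_heaviside]]
        bdd_meas_stair assms conv_iter_heaviside_shift)
  then show ?thesis
    by (simp add: conv_iter_sum[where B="\<lambda>_. 1"] bdd_meas_stair assms stair)
qed

lemma partial_sum_conv_iter_exp_density_bounded: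
  assumes "0 < \<delta>" "0 < tail_prob \<delta>"
  shows "(\<Sum>k<N. conv_iter k exp_density t) \<le> 1 / (tail_prob \<delta> * (1 - exp (- \<delta>)))"
proof -
  obtain M :: nat where M: "t < real M * \<delta>"
    using reals_Archimedean2[of "t / \<delta>"] assms(1) by (auto simp: field_simps)
  have "(\<Sum>k<N. conv_iter k exp_density t) \<le> (\<Sum>k<N. conv_iter k (step_majorant \<delta> M) t)"
    by (intro sum_mono conv_iter_mono[OF bdd_meas_exp_density bdd_meas_step_majorant]
        exp_density_le_step_majorant assms)
  also have "\<dots> = (\<Sum>m<M. exp (- (real m * \<delta>)) *
      (\<Sum>k<N. tilted_cdf k (t - real m * \<delta>) - tilted_cdf k (t - real m * \<delta> - \<delta>)))"
    using M by (simp add: conv_iter_step_majorant assms tilted_cdf_neg sum_distrib_left sum.swap[of _ "{..<N}"])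
  also have "\<dots> \<le> (\<Sum>m<M. exp (- \<delta>) ^ m * (1 / tail_prob \<delta>))"
    by (intro sum_mono mult_mono sum_tilted_cdf_increments_le assms)
       (use assms(1) in \<open>auto simp: exp_of_nat_mult[symmetric] intro!: sum_nonneg diff_ge_0_iff_ge[THEN iffD2] monoD[OF mono_tilted_cdf]\<close>)
  also have "\<dots> \<le> (\<Sum>m. exp (- \<delta>) ^ m) * (1 / tail_prob \<delta>)"
    unfolding sum_distrib_right[symmetric]
    using assms by (intro mult_right_mono sum_le_suminf summable_geometric) auto
  also have "\<dots> = 1 / (tail_prob \<delta> * (1 - exp (- \<delta>)))"
    using assms by (simp add: suminf_geometric)
  finally show ?thesis .
qed

lemma bdd_meas_exp_density_series:
  "bdd_meas (conv_series exp_density) (1 / (tail_prob \<delta> * (1 - exp (- \<delta>))))"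
  if "0 < \<delta>" "0 < tail_prob \<delta>"
  unfolding bdd_meas_def
  using suminf_le_const[OF summable_conv_iter partial_sum_conv_iter_exp_density_bounded[OF that]]
    conv_series_nonneg conv_series_measurable
  by (auto simp: exp_density_series_facts conv_series_def)

lemma bdd_above_range_phi: "bdd_above (range phi)"
proof -
  obtain \<delta> where "0 < \<delta>" "0 < tail_prob \<delta>"
    using exists_tail_prob_pos by blast
  from bdd_meas_exp_density_series[OF this] show ?thesis
    unfolding phi_def bdd_meas_def by (metis abs_le_D1 bdd_aboveI2)
qed

definition phi_sup :: real where "phi_sup = (SUP t. phi t)"

lemma phi_le_sup: "phi t \<le> phi_sup"
  unfolding phi_sup_def by (rule cSUP_upper[OF _ bdd_above_range_phi]) simp

lemma phi_nonneg: "0 \<le> phi t"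
  unfolding phi_def by (rule conv_series_nonneg[OF exp_density_series_facts])

lemma phi_sup_nonneg: "0 \<le> phi_sup"
  using phi_nonneg[of 0] phi_le_sup[of 0] by simp

lemma phi_measurable[measurable]: "phi \<in> borel_measurable borel"
  unfolding phi_def by (rule conv_series_measurable[OF exp_density_series_facts])

lemma bdd_meas_phi: "bdd_meas phi phi_sup"
  using phi_le_sup phi_nonneg by (intro bdd_measI phi_measurable) (simp add: abs_of_nonneg)

lemma phi_renewal_eq: "phi t = exp_density t + conv phi t"
  unfolding phi_def by (rule conv_series_renewal_eq[OF exp_density_series_facts])

lemma summable_conv_iter_exp_density: "summable (\<lambda>k. conv_iter k exp_density t)"
  by (rule summable_conv_iter[OF exp_density_series_facts])

lemma sums_conv_iter_exp_density: "(\<lambda>k. c * conv_iter k exp_density t) sums (c * phi t)"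
  unfolding phi_def conv_series_def by (intro sums_mult summable_sums summable_conv_iter_exp_density)

lemma summable_conv_iter_exp_cdf: "summable (\<lambda>k. conv_iter k exp_cdf t)"
  by (rule summable_conv_iter[OF exp_cdf_series_facts])

lemma Psi_nonneg: "0 \<le> Psi t"
  unfolding Psi_def by (rule conv_series_nonneg[OF exp_cdf_series_facts])

lemma Psi_le: "Psi t \<le> exp t / (1 - exp_moment)"
  unfolding Psi_def by (rule conv_series_le[OF exp_cdf_series_facts])

lemma Psi_measurable[measurable]: "Psi \<in> borel_measurable borel"
  unfolding Psi_def by (rule conv_series_measurable[OF exp_cdf_series_facts])

lemma Psi_renewal_eq: "Psi t = exp_cdf t + conv Psi t"
  unfolding Psi_def by (rule conv_series_renewal_eq[OF exp_cdf_series_facts])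

section \<open>Regularity of the renewal series\<close>

lemma mono_exp_mult_conv:
  assumes h: "bdd_meas h B" and m: "mono (\<lambda>s. exp s * h s)"
  shows "mono (\<lambda>t. exp t * conv h t)"
proof -
  have eq: "exp u * (tilt x * h (u - x)) = b * (exp (u - x) * h (u - x))" for u x
    by (simp add: tilt_def exp_diff exp_minus field_simps)
  have int: "integrable rho (\<lambda>x. b * (exp (u - x) * h (u - x)))" for u
  proof -
    have "integrable rho (\<lambda>x. exp u * (tilt x * h (u - x)))"
      by (intro integrable_mult_right integrable_conv_bdd_meas[OF h])
    then show ?thesis by (simp add: eq)
  qed
  have "exp t * conv h t \<le> exp t' * conv h t'" if "t \<le> t'" for t t'
    unfolding conv_def integral_mult_right_zero[symmetric] eq
  proof (rule integral_mono[OF int int])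
    show "b * (exp (t - x) * h (t - x)) \<le> b * (exp (t' - x) * h (t' - x))" for x
      using b_ge_1 monoD[OF m, of "t - x" "t' - x"] that by (intro mult_left_mono) auto
  qed
  then show ?thesis by (rule monoI)
qed

lemma mono_exp_mult_conv_iter_exp_density: "mono (\<lambda>t. exp t * conv_iter k exp_density t)"
proof (induction k)
  case 0
  have "(\<lambda>t. exp t * exp_density t) = heaviside"
    by (auto simp: exp_density_def heaviside_def fun_eq_iff exp_minus)
  then show ?case using mono_heaviside by simp
next
  case (Suc k)
  then show ?case
    unfolding conv_iter_Suc by (rule mono_exp_mult_conv[OF bdd_meas_conv_iter[OF bdd_meas_exp_density]])
qed

lemma mono_exp_mult_phi: "mono (\<lambda>t. exp t * phi t)"
proof (rule monoI)
  fix t t' :: real assume "t \<le> t'"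
  have "exp t * phi t = (\<Sum>k. exp t * conv_iter k exp_density t)" for t
    unfolding phi_def conv_series_def by (rule suminf_mult[symmetric, OF summable_conv_iter_exp_density])
  moreover have "(\<Sum>k. exp t * conv_iter k exp_density t) \<le> (\<Sum>k. exp t' * conv_iter k exp_density t')"
    using monoD[OF mono_exp_mult_conv_iter_exp_density \<open>t \<le> t'\<close>]
    by (intro suminf_le) (auto intro!: summable_mult summable_conv_iter_exp_density)
  ultimately show "exp t * phi t \<le> exp t' * phi t'" by simp
qed

lemma phi_le_exp_mult: "s \<le> t \<Longrightarrow> phi s \<le> exp (t - s) * phi t"
  using monoD[OF mono_exp_mult_phi, of s t] by (simp add: exp_diff field_simps)

lemma phi_eq_partial_sum_plus_conv_iter: "phi t = (\<Sum>i<k. conv_iter i exp_density t) + conv_iter k phi t"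
proof (induction k arbitrary: t)
  case (Suc k)
  have "phi = (\<lambda>s. exp_density s + conv phi s)"
    by (rule ext) (rule phi_renewal_eq)
  then have "conv_iter k phi = conv_iter k (\<lambda>s. exp_density s + conv phi s)"
    by (rule arg_cong)
  also have "\<dots> = (\<lambda>t. conv_iter k exp_density t + conv_iter (Suc k) phi t)"
    by (simp add: conv_iter_add[OF bdd_meas_exp_density bdd_meas_conv[OF bdd_meas_phi]] conv_iter_Suc')
  finally have "conv_iter k phi t = conv_iter k exp_density t + conv_iter (Suc k) phi t"
    by simp
  then show ?case
    unfolding sum.lessThan_Suc using Suc.IH[of t] by linarith
qed simp

lemma partial_sum_conv_iter_exp_density_le_exp_neg: "(\<Sum>i<k. conv_iter i exp_density t) \<le> real k * b ^ k * exp (- t)"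
proof -
  have "conv_iter i exp_density t \<le> b ^ k * exp (- t)" if "i < k" for i
  proof -
    have "conv_iter i exp_density t \<le> b ^ i * 1 * exp (- t)"
      by (rule conv_iter_le_exp_neg[OF bdd_meas_exp_density]) (simp add: exp_density_def)
    also have "b ^ i \<le> b ^ k"
      using b_ge_1 that by (intro power_increasing) auto
    then have "b ^ i * 1 * exp (- t) \<le> b ^ k * exp (- t)"
      by simp
    finally show ?thesis .
  qed
  then show ?thesis
    using sum_bounded_above[of "{..<k}" "\<lambda>i. conv_iter i exp_density t" "b ^ k * exp (- t)"] by simp
qed

definition mu :: real where "mu = (\<integral>x. tilt x * x \<partial>rho)"

lemma integrable_tilt_mult_id: "integrable rho (\<lambda>x. tilt x * x)"
proof (rule integrable_const_bound[where B=b])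
  show "AE x in rho. norm (tilt x * x) \<le> b"
    using AE_pos
  proof eventually_elim
    case (elim x)
    have "x \<le> exp x"
      using exp_ge_add_one_self[of x] by linarith
    then have "x * exp (-x) \<le> 1"
      by (simp add: exp_minus field_simps)
    then show ?case using elim b_ge_1 by (simp add: tilt_def abs_mult mult_ac mult_left_le)
  qed
qed (simp add: borel_measurable_rho_iff)

lemma mu_pos: "0 < mu"
proof -
  have "(\<integral>x. 0 \<partial>rho) < mu"
    unfolding mu_def
    by (rule integral_less_AE_space[OF _ integrable_tilt_mult_id])
       (use AE_pos tilt_pos in \<open>auto simp: emeasure_space_1 elim!: eventually_mono\<close>)
  then show ?thesis by simp
qed

lemma one_minus_tilted_cdf_shift_le:
  assumes "0 < t" "0 < x"
  shows "1 - tilted_cdf k (t - x) \<le> (1 - tilted_cdf k (t / 2)) + 2 / t * x"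
proof (cases "x \<le> t / 2")
  case True
  then have "tilted_cdf k (t / 2) \<le> tilted_cdf k (t - x)"
    by (intro monoD[OF mono_tilted_cdf]) simp
  moreover have "0 \<le> 2 / t * x" using assms by simp
  ultimately show ?thesis by simp
next
  case False
  then have "1 \<le> 2 / t * x" using assms by (simp add: field_simps)
  then show ?thesis using tilted_cdf_nonneg[of k "t - x"] tilted_cdf_le_1[of k "t / 2"] by simp
qed

text \<open>A Markov-type bound; the crude factor \<open>2\<^sup>k\<close> is harmless since \<open>k\<close> stays bounded.\<close>

lemma one_minus_tilted_cdf_le: "0 < t \<Longrightarrow> 1 - tilted_cdf k t \<le> real k * 2 ^ k * mu / t"
proof (induction k arbitrary: t)
  case 0
  then show ?case by (simp add: tilted_cdf_0 heaviside_def)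
next
  case (Suc k)
  have int: "integrable rho (\<lambda>x. tilt x * tilted_cdf k (t - x))"
    by (rule integrable_conv_bdd_meas[OF bdd_meas_tilted_cdf])
  have "1 - tilted_cdf (Suc k) t = (\<integral>x. tilt x * (1 - tilted_cdf k (t - x)) \<partial>rho)"
    using integral_tilt int integrable_tilt by (simp add: tilted_cdf_Suc right_diff_distrib)
  also have "\<dots> \<le> (\<integral>x. (1 - tilted_cdf k (t / 2)) * tilt x + 2 / t * (tilt x * x) \<partial>rho)"
  proof (rule integral_mono_AE)
    show "AE x in rho. tilt x * (1 - tilted_cdf k (t - x)) \<le> (1 - tilted_cdf k (t / 2)) * tilt x + 2 / t * (tilt x * x)"
      using AE_pos
    proof eventually_elim
      case (elim x)
      from mult_left_mono[OF one_minus_tilted_cdf_shift_le[OF Suc.prems elim] less_imp_le[OF tilt_pos]]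
      show ?case by (simp add: algebra_simps)
    qed
  qed (use int integrable_tilt integrable_tilt_mult_id in \<open>auto simp: right_diff_distrib\<close>)
  also have "\<dots> = (1 - tilted_cdf k (t / 2)) + 2 / t * mu"
    using integrable_tilt integrable_tilt_mult_id integral_tilt by (simp add: mu_def)
  also have "\<dots> \<le> real k * 2 ^ k * mu / (t / 2) + 2 / t * mu"
    using Suc.IH[of "t/2"] Suc.prems by simp
  also have "\<dots> \<le> real (Suc k) * 2 ^ Suc k * mu / t"
  proof -
    have "real k * 2 ^ Suc k + 2 \<le> real (Suc k) * 2 ^ Suc k"
      using one_le_power[of "2::real" "Suc k"] by (simp add: algebra_simps)
    then show ?thesis
      using mu_pos Suc.prems by (simp add: field_simps mult_right_mono)
  qed
  finally show ?case .
qed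

section \<open>Increments of \<open>Psi\<close>\<close>

lemma mono_exp_cdf: "mono exp_cdf"
  by (auto simp: mono_def exp_cdf_def)

lemma mono_Psi: "mono Psi"
proof (rule monoI)
  fix t t' :: real assume "t \<le> t'"
  then show "Psi t \<le> Psi t'"
    unfolding Psi_def conv_series_def
    by (intro suminf_le summable_conv_iter_exp_cdf monoD[OF mono_conv_iter[OF bdd_meas_exp_cdf mono_exp_cdf]])
qed

lemma exp_cdf_increment_ge: "0 < h \<Longrightarrow> h * exp (-h) * exp_density (s - h) \<le> exp_cdf s - exp_cdf (s - h)"
proof (cases "s < h")
  case True
  assume "0 < h"
  then have "exp_cdf (s - h) \<le> exp_cdf s" by (intro monoD[OF mono_exp_cdf]) simp
  then show ?thesis using True by (simp add: exp_density_def)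
next
  case False
  assume h: "0 < h"
  have "h \<le> exp h - 1" using exp_ge_add_one_self[of h] by linarith
  then have "h * exp (-s) \<le> (exp h - 1) * exp (-s)" by (rule mult_right_mono) simp
  also have "\<dots> = exp (-(s - h)) - exp (-s)" by (simp add: algebra_simps exp_add[symmetric])
  moreover have "exp (-h) * exp (h - s) = exp (-s)" by (simp add: exp_add[symmetric])
  ultimately show ?thesis using False h
    by (simp add: exp_density_def exp_cdf_def mult.assoc)
qed

lemma exp_cdf_increment_le: "0 < h \<Longrightarrow> exp_cdf s - exp_cdf (s - h) \<le> h * exp h * exp_density s"
proof -
  assume h: "0 < h"
  have exp_h_s: "h * exp (h - s) = h * exp h * exp (-s)"
    by (simp add: exp_diff exp_minus field_simps)
  consider "s < 0" | "0 \<le> s" "s < h" | "h \<le> s" by linarith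
  then show ?thesis
  proof cases
    case 1
    then show ?thesis using h by (simp add: exp_cdf_def exp_density_def)
  next
    case 2
    have "1 - exp (-s) \<le> s" using exp_ge_add_one_self[of "-s"] by simp
    also have "s \<le> h * exp (h - s)"
    proof -
      have "h * 1 \<le> h * exp (h - s)"
        using 2 h by (intro mult_left_mono) auto
      then show ?thesis using 2 by linarith
    qed
    finally show ?thesis using 2 exp_h_s by (simp add: exp_cdf_def exp_density_def)
  next
    case 3
    have "1 - exp (-h) \<le> h" using exp_ge_add_one_self[of "-h"] by simp
    then have "(1 - exp (-h)) * exp (h - s) \<le> h * exp (h - s)" by (intro mult_right_mono) auto
    moreover have "(1 - exp (-h)) * exp (h - s) = exp (-(s - h)) - exp (-s)"
      by (simp add: algebra_simps exp_add[symmetric])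
    ultimately show ?thesis using 3 h exp_h_s by (simp add: exp_cdf_def exp_density_def)
  qed
qed

lemma bdd_meas_exp_cdf_increment: "bdd_meas (\<lambda>u. exp_cdf u - exp_cdf (u - h)) 2"
proof (rule bdd_measI)
  show "\<bar>exp_cdf u - exp_cdf (u - h)\<bar> \<le> 2" for u
    using exp_cdf_nonneg[of u] exp_cdf_nonneg[of "u - h"] exp_cdf_le_1[of u] exp_cdf_le_1[of "u - h"]
    by (simp add: abs_le_iff)
qed measurable

lemma bdd_meas_exp_density_shift: "bdd_meas (\<lambda>u. c * exp_density (u - h)) \<bar>c\<bar>"
proof (rule bdd_measI)
  show "\<bar>c * exp_density (u - h)\<bar> \<le> \<bar>c\<bar>" for u
    using exp_density_nonneg[of "u - h"] exp_density_le_1[of "u - h"] by (simp add: abs_mult mult_left_le)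
qed measurable

lemma conv_iter_exp_cdf_increment:
  "conv_iter k (\<lambda>u. exp_cdf u - exp_cdf (u - h)) s = conv_iter k exp_cdf s - conv_iter k exp_cdf (s - h)"
  by (simp add: conv_iter_diff[OF bdd_meas_exp_cdf bdd_meas_shift[OF bdd_meas_exp_cdf]] conv_iter_shift')

lemma Psi_increment_eq_suminf: "Psi s - Psi (s - h) = (\<Sum>k. conv_iter k exp_cdf s - conv_iter k exp_cdf (s - h))"
  unfolding Psi_def conv_series_def by (rule suminf_diff) (auto intro!: summable_conv_iter_exp_cdf)

lemma Psi_increment_ge: "0 < h \<Longrightarrow> h * exp (-h) * phi (s - h) \<le> Psi s - Psi (s - h)"
proof -
  assume h: "0 < h"
  have "h * exp (-h) * phi (s - h) = (\<Sum>k. h * exp (-h) * conv_iter k exp_density (s - h))"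
    unfolding phi_def conv_series_def by (rule suminf_mult[symmetric, OF summable_conv_iter_exp_density])
  also have "\<dots> \<le> (\<Sum>k. conv_iter k exp_cdf s - conv_iter k exp_cdf (s - h))"
  proof (rule suminf_le)
    show "h * exp (-h) * conv_iter k exp_density (s - h) \<le> conv_iter k exp_cdf s - conv_iter k exp_cdf (s - h)" for k
      using conv_iter_mono[OF bdd_meas_exp_density_shift bdd_meas_exp_cdf_increment exp_cdf_increment_ge[OF h], of k s]
      by (simp add: conv_iter_cmult conv_iter_shift' conv_iter_exp_cdf_increment)
  qed (intro summable_mult summable_diff summable_conv_iter_exp_density summable_conv_iter_exp_cdf)+
  also have "\<dots> = Psi s - Psi (s - h)" by (rule Psi_increment_eq_suminf[symmetric])
  finally show ?thesis .
qed

lemma Psi_increment_le: "0 < h \<Longrightarrow> Psi s - Psi (s - h) \<le> h * exp h * phi s"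
proof -
  assume h: "0 < h"
  have "Psi s - Psi (s - h) = (\<Sum>k. conv_iter k exp_cdf s - conv_iter k exp_cdf (s - h))"
    by (rule Psi_increment_eq_suminf)
  also have "\<dots> \<le> (\<Sum>k. h * exp h * conv_iter k exp_density s)"
  proof (rule suminf_le)
    show "conv_iter k exp_cdf s - conv_iter k exp_cdf (s - h) \<le> h * exp h * conv_iter k exp_density s" for k
      using conv_iter_mono[OF bdd_meas_exp_cdf_increment bdd_meas_exp_density_shift, of h "h * exp h" 0 k s]
        exp_cdf_increment_le[OF h]
      by (simp add: conv_iter_cmult conv_iter_exp_cdf_increment)
  qed (intro summable_mult summable_diff summable_conv_iter_exp_density summable_conv_iter_exp_cdf)+
  also have "\<dots> = h * exp h * phi s"
    unfolding phi_def conv_series_def by (simp add: suminf_mult[OF summable_conv_iter_exp_density])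
  finally show ?thesis .
qed

lemma integrable_conv_Psi: "integrable rho (\<lambda>x. tilt x * Psi (t - x))"
proof (rule integrable_conv)
  show "\<bar>Psi s\<bar> \<le> exp t / (1 - exp_moment)" if "s \<le> t" for s
  proof -
    have "Psi s \<le> exp s / (1 - exp_moment)" by (rule Psi_le)
    also have "\<dots> \<le> exp t / (1 - exp_moment)"
      using that exp_moment_less_1 by (intro divide_right_mono) auto
    finally show ?thesis using Psi_nonneg[of s] by simp
  qed
qed simp

lemma integrable_Psi_increment: "integrable rho (\<lambda>x. tilt x * (Psi t - Psi (t - x)))"
proof -
  have "integrable rho (\<lambda>x. Psi t * tilt x - tilt x * Psi (t - x))"
    by (intro Bochner_Integration.integrable_diff integrable_mult_right integrable_tilt integrable_conv_Psi)
  then show ?thesis by (simp add: algebra_simps)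
qed

lemma integral_Psi_increment: "(\<integral>x. tilt x * (Psi t - Psi (t - x)) \<partial>rho) = exp_cdf t"
proof -
  have "(\<integral>x. tilt x * (Psi t - Psi (t - x)) \<partial>rho) = (\<integral>x. Psi t * tilt x - tilt x * Psi (t - x) \<partial>rho)"
    by (simp add: algebra_simps)
  also have "\<dots> = Psi t - conv Psi t"
    using integrable_conv_Psi[of t] integrable_tilt integral_tilt by (simp add: conv_def)
  also have "\<dots> = exp_cdf t" using Psi_renewal_eq[of t] by simp
  finally show ?thesis .
qed

lemma Psi_telescope:
  "Psi t - Psi (t - real J * h) = (\<Sum>j<J. Psi (t - real j * h) - Psi (t - real j * h - h))"
  using sum_lessThan_telescope[of "\<lambda>j. - Psi (t - real j * h)" J]
  by (simp add: algebra_simps)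

lemma Psi_increment_ge_window:
  assumes h: "0 < h" and c: "0 \<le> c" and phi_ge: "\<And>y. 0 \<le> y \<Longrightarrow> y \<le> T \<Longrightarrow> c \<le> phi (t - y)"
    and x: "0 < x" "x \<le> T"
  shows "(x - h) * exp (-h) * c \<le> Psi t - Psi (t - x)"
proof -
  obtain J :: nat where J: "real J * h \<le> x" "x < real J * h + h"
    using nat_multiple_le_lt[OF h, of x] x by auto
  have "(x - h) * (exp (-h) * c) \<le> (real J * h) * (exp (-h) * c)"
    using J c by (intro mult_right_mono) auto
  then have "(x - h) * exp (-h) * c \<le> (\<Sum>j<J. h * exp (-h) * c)"
    by (simp add: mult_ac)
  also have "\<dots> \<le> (\<Sum>j<J. Psi (t - real j * h) - Psi (t - real j * h - h))"
  proof (rule sum_mono)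
    fix j assume "j \<in> {..<J}"
    then have "(real j + 1) * h \<le> real J * h"
      using h by (intro mult_right_mono) auto
    then have "real j * h + h \<le> real J * h"
      by (simp add: algebra_simps)
    then have "c \<le> phi (t - real j * h - h)"
      using J h x phi_ge[of "real j * h + h"] by (simp add: algebra_simps)
    then have "h * exp (-h) * c \<le> h * exp (-h) * phi (t - real j * h - h)"
      using h by simp
    also have "\<dots> \<le> Psi (t - real j * h) - Psi (t - real j * h - h)"
      using Psi_increment_ge[OF h, of "t - real j * h"] by simp
    finally show "h * exp (-h) * c \<le> Psi (t - real j * h) - Psi (t - real j * h - h)" .
  qed
  also have "\<dots> = Psi t - Psi (t - real J * h)" by (rule Psi_telescope[symmetric])
  also have "\<dots> \<le> Psi t - Psi (t - x)"
    using J by (simp add: monoD[OF mono_Psi])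
  finally show ?thesis .
qed

lemma Psi_increment_le_window:
  assumes h: "0 < h" and c: "0 \<le> c" and phi_le: "\<And>y. 0 \<le> y \<Longrightarrow> y \<le> T \<Longrightarrow> phi (t - y) \<le> c"
    and x: "0 < x" "x \<le> T"
  shows "Psi t - Psi (t - x) \<le> (x + h) * exp h * c"
proof -
  obtain J :: nat where J: "real J * h \<le> x" "x < real J * h + h"
    using nat_multiple_le_lt[OF h, of x] x by auto
  have "Psi t - Psi (t - x) \<le> Psi t - Psi (t - real (Suc J) * h)"
    using J by (simp add: monoD[OF mono_Psi] algebra_simps)
  also have "\<dots> = (\<Sum>j<Suc J. Psi (t - real j * h) - Psi (t - real j * h - h))"
    by (rule Psi_telescope)
  also have "\<dots> \<le> (\<Sum>j<Suc J. h * exp h * c)"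
  proof (rule sum_mono)
    fix j assume "j \<in> {..<Suc J}"
    then have "real j * h \<le> real J * h"
      using h by (intro mult_right_mono) auto
    then have "real j * h \<le> x"
      using J by linarith
    then have "phi (t - real j * h) \<le> c"
      using h x by (intro phi_le) auto
    then have "h * exp h * phi (t - real j * h) \<le> h * exp h * c"
      using h by simp
    with Psi_increment_le[OF h, of "t - real j * h"]
    show "Psi (t - real j * h) - Psi (t - real j * h - h) \<le> h * exp h * c"
      by simp
  qed
  also have "\<dots> = (real J * h + h) * (exp h * c)"
    by (simp add: algebra_simps)
  also have "\<dots> \<le> (x + h) * (exp h * c)"
    using J c by (intro mult_right_mono) auto
  finally show ?thesis by (simp add: mult_ac)
qed

lemma Psi_increment_le_global: "0 < h \<Longrightarrow> 0 < x \<Longrightarrow> Psi t - Psi (t - x) \<le> (x + h) * exp h * phi_sup"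
  by (rule Psi_increment_le_window[OF _ phi_sup_nonneg _ _ order.refl]) (auto intro: phi_le_sup)

definition trunc_mean :: "real \<Rightarrow> real" where
  "trunc_mean T = (\<integral>x. indicator {..T} x * (tilt x * x) \<partial>rho)"

definition trunc_mass :: "real \<Rightarrow> real" where
  "trunc_mass T = (\<integral>x. indicator {..T} x * tilt x \<partial>rho)"

lemma integrable_indicator_tilt_mult_id: "integrable rho (\<lambda>x. indicator {..T} x * (tilt x * x))"
  using integrable_mult_indicator[OF _ integrable_tilt_mult_id, of "{..T}"] by (simp add: sets_rho)

lemma integrable_indicator_tilt: "integrable rho (\<lambda>x. indicator {..T} x * tilt x)"
  using integrable_mult_indicator[OF _ integrable_tilt, of "{..T}"] by (simp add: sets_rho)

lemma trunc_mass_le_1: "trunc_mass T \<le> 1"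
proof -
  have "trunc_mass T \<le> (\<integral>x. tilt x \<partial>rho)"
    unfolding trunc_mass_def
    by (rule integral_mono[OF integrable_indicator_tilt integrable_tilt])
       (use tilt_pos in \<open>auto simp: indicator_def less_imp_le\<close>)
  then show ?thesis using integral_tilt by simp
qed

lemma trunc_mean_tendsto: "(trunc_mean \<longlongrightarrow> mu) at_top"
  using tendsto_integral_at_top[OF sets_rho integrable_tilt_mult_id]
  by (simp add: trunc_mean_def[abs_def] mu_def)

lemma trunc_mean_le_of_phi_ge_on_window:
  assumes h: "0 < h" and c: "0 \<le> c" and window: "\<And>y. 0 \<le> y \<Longrightarrow> y \<le> T \<Longrightarrow> c \<le> phi (\<tau> - y)"
  shows "exp (- h) * c * (trunc_mean T - h) \<le> 1"
proof -
  define f where "f x = indicator {..T} x * (tilt x * ((x - h) * exp (- h) * c))" for x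
  have f_eq: "f = (\<lambda>x. (exp (- h) * c) * (indicator {..T} x * (tilt x * x)) - (exp (- h) * c * h) * (indicator {..T} x * tilt x))"
    by (auto simp: fun_eq_iff f_def algebra_simps)
  have "(\<integral>x. f x \<partial>rho) \<le> (\<integral>x. tilt x * (Psi \<tau> - Psi (\<tau> - x)) \<partial>rho)"
  proof (rule integral_mono_AE)
    show "integrable rho f"
      unfolding f_eq using integrable_indicator_tilt_mult_id integrable_indicator_tilt by simp
    show "AE x in rho. f x \<le> tilt x * (Psi \<tau> - Psi (\<tau> - x))"
      using AE_pos
    proof eventually_elim
      case (elim x)
      show ?case
      proof (cases "x \<le> T")
        case True
        have "(x - h) * exp (-h) * c \<le> Psi \<tau> - Psi (\<tau> - x)"
          by (rule Psi_increment_ge_window[OF h c window elim True])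
        then show ?thesis using True tilt_pos[of x] by (simp add: f_def mult_left_mono)
      next
        case False
        have "Psi (\<tau> - x) \<le> Psi \<tau>" using elim by (intro monoD[OF mono_Psi]) simp
        then show ?thesis using False tilt_pos[of x] by (simp add: f_def)
      qed
    qed
  qed (rule integrable_Psi_increment)
  also have "\<dots> \<le> 1"
    by (simp add: integral_Psi_increment exp_cdf_le_1)
  moreover have "(\<integral>x. f x \<partial>rho) = exp (- h) * c * trunc_mean T - exp (- h) * c * h * trunc_mass T"
    unfolding f_eq trunc_mean_def trunc_mass_def
    using integrable_indicator_tilt_mult_id integrable_indicator_tilt by simp
  ultimately have "exp (- h) * c * (trunc_mean T - h * trunc_mass T) \<le> 1"
    by (simp add: algebra_simps)
  moreover have "exp (- h) * c * (trunc_mean T - h) \<le> exp (- h) * c * (trunc_mean T - h * trunc_mass T)"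
    using trunc_mass_le_1[of T] h c by (intro mult_left_mono) (auto simp: mult_left_le)
  ultimately show ?thesis by linarith
qed

lemma Psi_increment_le_window_or_global:
  assumes h: "0 < h" and c: "0 \<le> c" and window: "\<And>y. 0 \<le> y \<Longrightarrow> y \<le> T \<Longrightarrow> phi (\<tau> - y) \<le> c" and x: "0 < x"
  shows "Psi \<tau> - Psi (\<tau> - x) \<le> exp h * (c * (x + h) + phi_sup * ((1 - indicator {..T} x) * x + h))"
proof (cases "x \<le> T")
  case True
  have "Psi \<tau> - Psi (\<tau> - x) \<le> (x + h) * exp h * c"
    by (rule Psi_increment_le_window[OF h c window x True])
  moreover have "0 \<le> exp h * (phi_sup * ((1 - indicator {..T} x) * x + h))"
    using phi_sup_nonneg h True by simp
  ultimately show ?thesis by (simp add: algebra_simps)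
next
  case False
  have "Psi \<tau> - Psi (\<tau> - x) \<le> (x + h) * exp h * phi_sup"
    by (rule Psi_increment_le_global[OF h x])
  moreover have "0 \<le> exp h * (c * (x + h))"
    using c h x by simp
  ultimately show ?thesis using False by (simp add: algebra_simps)
qed

lemma exp_cdf_le_of_phi_le_on_window:
  assumes h: "0 < h" and c: "0 \<le> c" and window: "\<And>y. 0 \<le> y \<Longrightarrow> y \<le> T \<Longrightarrow> phi (\<tau> - y) \<le> c"
  shows "exp_cdf \<tau> \<le> exp h * (c * (mu + h) + phi_sup * (mu - trunc_mean T + h))"
proof -
  define f where "f x = exp h * (c * (x + h) + phi_sup * ((1 - indicator {..T} x) * x + h))" for x
  have f_eq: "(\<lambda>x. tilt x * f x) = (\<lambda>x. (exp h * c + exp h * phi_sup) * (tilt x * x)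
      + (exp h * c * h + exp h * phi_sup * h) * tilt x - (exp h * phi_sup) * (indicator {..T} x * (tilt x * x)))"
    by (auto simp: fun_eq_iff f_def algebra_simps)
  have "exp_cdf \<tau> = (\<integral>x. tilt x * (Psi \<tau> - Psi (\<tau> - x)) \<partial>rho)"
    by (simp add: integral_Psi_increment)
  also have "\<dots> \<le> (\<integral>x. tilt x * f x \<partial>rho)"
  proof (rule integral_mono_AE[OF integrable_Psi_increment])
    show "integrable rho (\<lambda>x. tilt x * f x)"
      unfolding f_eq using integrable_tilt_mult_id integrable_tilt integrable_indicator_tilt_mult_id by simp
    show "AE x in rho. tilt x * (Psi \<tau> - Psi (\<tau> - x)) \<le> tilt x * f x"
      using AE_pos
    proof eventually_elim
      case (elim x)
      from Psi_increment_le_window_or_global[OF h c window elim]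
      show ?case using tilt_pos[of x] by (simp add: f_def mult_left_mono)
    qed
  qed
  also have "\<dots> = (exp h * c + exp h * phi_sup) * mu + (exp h * c * h + exp h * phi_sup * h) * 1
      - (exp h * phi_sup) * trunc_mean T"
    unfolding f_eq using integrable_tilt_mult_id integrable_tilt integrable_indicator_tilt_mult_id integral_tilt
    by (simp add: mu_def trunc_mean_def)
  also have "\<dots> = exp h * (c * (mu + h) + phi_sup * (mu - trunc_mean T + h))"
    by (simp add: algebra_simps)
  finally show ?thesis .
qed

lemma trunc_mean_Suc_tendsto: "(\<lambda>n. trunc_mean (real (Suc n))) \<longlonglongrightarrow> mu"
  using LIMSEQ_Suc[OF filterlim_compose[OF trunc_mean_tendsto filterlim_real_sequentially]] .

section \<open>Oscillation of \<open>phi\<close>\<close>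

definition phi_tail_sup :: "real \<Rightarrow> real" where "phi_tail_sup s = Sup (phi ` {s..})"
definition phi_tail_inf :: "real \<Rightarrow> real" where "phi_tail_inf s = Inf (phi ` {s..})"
definition phi_limsup :: real where "phi_limsup = Inf (range phi_tail_sup)"
definition phi_liminf :: real where "phi_liminf = Sup (range phi_tail_inf)"

lemma bdd_phi_image: "bdd_above (phi ` A)" "bdd_below (phi ` A)"
  using phi_le_sup phi_nonneg by (auto intro!: bdd_aboveI bdd_belowI)

lemma phi_le_tail_sup: "s \<le> t \<Longrightarrow> phi t \<le> phi_tail_sup s"
  unfolding phi_tail_sup_def by (rule cSup_upper[OF _ bdd_phi_image(1)]) auto

lemma tail_inf_le_phi: "s \<le> t \<Longrightarrow> phi_tail_inf s \<le> phi t"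
  unfolding phi_tail_inf_def by (rule cInf_lower[OF _ bdd_phi_image(2)]) auto

lemma phi_limsup_le_tail_sup: "phi_limsup \<le> phi_tail_sup s"
  unfolding phi_limsup_def
  by (rule cInf_lower) (auto intro!: bdd_belowI[of _ 0] order.trans[OF phi_nonneg phi_le_tail_sup])

lemma tail_inf_le_phi_liminf: "phi_tail_inf s \<le> phi_liminf"
  unfolding phi_liminf_def
  by (rule cSup_upper) (auto intro!: bdd_aboveI[of _ phi_sup] order.trans[OF tail_inf_le_phi phi_le_sup])

lemma phi_limsup_nonneg: "0 \<le> phi_limsup"
  unfolding phi_limsup_def by (rule cInf_greatest) (auto intro: order.trans[OF phi_nonneg phi_le_tail_sup])

lemma phi_liminf_nonneg: "0 \<le> phi_liminf"
proof -
  have "0 \<le> phi_tail_inf 0"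
    unfolding phi_tail_inf_def by (rule cInf_greatest) (auto intro: phi_nonneg)
  then show ?thesis using tail_inf_le_phi_liminf[of 0] by simp
qed

lemma eventually_phi_le_limsup:
  assumes "0 < \<eta>" shows "eventually (\<lambda>t. phi t \<le> phi_limsup + \<eta>) at_top"
proof -
  obtain s where "phi_tail_sup s < phi_limsup + \<eta>"
    using cInf_lessD[of "range phi_tail_sup" "phi_limsup + \<eta>"] assms by (auto simp: phi_limsup_def)
  then show ?thesis
    unfolding eventually_at_top_linorder by (meson less_imp_le order_trans phi_le_tail_sup)
qed

lemma frequently_phi_ge_limsup:
  assumes "0 < \<eta>" shows "frequently (\<lambda>t. phi_limsup - \<eta> \<le> phi t) at_top"
  unfolding frequently_at_top_iff
proof
  fix s
  have "phi_limsup - \<eta> < Sup (phi ` {s..})"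
    using phi_limsup_le_tail_sup[of s] assms by (simp add: phi_tail_sup_def)
  then show "\<exists>t\<ge>s. phi_limsup - \<eta> \<le> phi t"
    using less_cSupD[of "phi ` {s..}" "phi_limsup - \<eta>"] by (auto intro: less_imp_le)
qed

lemma eventually_phi_ge_liminf:
  assumes "0 < \<eta>" shows "eventually (\<lambda>t. phi_liminf - \<eta> \<le> phi t) at_top"
proof -
  obtain s where "phi_liminf - \<eta> < phi_tail_inf s"
    using less_cSupD[of "range phi_tail_inf" "phi_liminf - \<eta>"] assms by (auto simp: phi_liminf_def)
  then show ?thesis
    unfolding eventually_at_top_linorder by (meson less_imp_le order_trans tail_inf_le_phi)
qed

lemma frequently_phi_le_liminf:
  assumes "0 < \<eta>" shows "frequently (\<lambda>t. phi t \<le> phi_liminf + \<eta>) at_top"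
  unfolding frequently_at_top_iff
proof
  fix s
  have "Inf (phi ` {s..}) < phi_liminf + \<eta>"
    using tail_inf_le_phi_liminf[of s] assms by (simp add: phi_tail_inf_def)
  then show "\<exists>t\<ge>s. phi t \<le> phi_liminf + \<eta>"
    using cInf_lessD[of "phi ` {s..}" "phi_liminf + \<eta>"] by (auto intro: less_imp_le)
qed

lemma conv_iter_le_of_le_beyond:
  assumes P: "bdd_meas P B" and eta: "0 \<le> \<eta>" and beyond: "\<And>u. s0 \<le> u \<Longrightarrow> P u \<le> \<eta>"
  shows "conv_iter k P t \<le> \<eta> + B * (1 - tilted_cdf k (t - s0))"
proof -
  have B: "0 \<le> B" using bdd_measD(2)[OF P, of 0] by linarith
  have step: "bdd_meas (\<lambda>u. B * heaviside (u - s0)) B"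
    using B by (intro bdd_measI) (auto simp: heaviside_def)
  have "P u \<le> (\<eta> + B) - B * heaviside (u - s0)" for u
    using beyond[of u] bdd_measD(2)[OF P, of u] eta by (auto simp: heaviside_def)
  then have "conv_iter k P t \<le> conv_iter k (\<lambda>u. (\<eta> + B) - B * heaviside (u - s0)) t"
    by (rule conv_iter_mono[OF P bdd_meas_diff[OF bdd_meas_const step]])
  also have "\<dots> = (\<eta> + B) - B * tilted_cdf k (t - s0)"
    by (simp add: conv_iter_diff[OF bdd_meas_const step] conv_iter_const conv_iter_cmult conv_iter_heaviside_shift)
  finally show ?thesis by (simp add: algebra_simps)
qed

lemma eventually_conv_iter_le:
  assumes P: "bdd_meas P B" and "0 < \<eta>" and ev: "eventually (\<lambda>u. P u \<le> \<eta>) at_top"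
  shows "eventually (\<lambda>t. \<forall>k\<le>K. conv_iter k P t \<le> 2 * \<eta>) at_top"
proof -
  obtain s0 where beyond: "\<And>u. s0 \<le> u \<Longrightarrow> P u \<le> \<eta>"
    using ev by (auto simp: eventually_at_top_linorder)
  have B: "0 \<le> B" using bdd_measD(2)[OF P, of 0] by linarith
  have "((\<lambda>t. B * (real K * 2 ^ K * mu) / (t - s0)) \<longlongrightarrow> 0) at_top"
    by real_asymp
  then have "eventually (\<lambda>t. B * (real K * 2 ^ K * mu) / (t - s0) < \<eta>) at_top"
    using \<open>0 < \<eta>\<close> by (rule order_tendstoD)
  moreover have "eventually (\<lambda>t. s0 < t) at_top"
    by (rule eventually_gt_at_top)
  ultimately show ?thesis
  proof eventually_elim
    case (elim t)
    show ?case
    proof (intro allI impI)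
      fix k assume "k \<le> K"
      have "real k * 2 ^ k * mu \<le> real K * 2 ^ K * mu"
        using \<open>k \<le> K\<close> mu_pos by (intro mult_right_mono mult_mono power_increasing) auto
      then have "real k * 2 ^ k * mu / (t - s0) \<le> real K * 2 ^ K * mu / (t - s0)"
        using elim by (intro divide_right_mono) auto
      with one_minus_tilted_cdf_le[of "t - s0" k] elim
      have "1 - tilted_cdf k (t - s0) \<le> real K * 2 ^ K * mu / (t - s0)"
        by simp
      from mult_left_mono[OF this B]
      have "B * (1 - tilted_cdf k (t - s0)) \<le> B * (real K * 2 ^ K * mu) / (t - s0)"
        by simp
      then show "conv_iter k P t \<le> 2 * \<eta>"
        using conv_iter_le_of_le_beyond[OF P less_imp_le[OF \<open>0 < \<eta>\<close>], of s0 k t] beyond elim by simp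
    qed
  qed
qed

lemma eventually_partial_sum_conv_iter_exp_density_le:
  assumes "0 < \<eta>" shows "eventually (\<lambda>t. \<forall>k\<le>K. (\<Sum>i<k. conv_iter i exp_density t) \<le> \<eta>) at_top"
proof -
  have "((\<lambda>t. real K * b ^ K * exp (- t)) \<longlongrightarrow> 0) at_top"
    by real_asymp
  then have "eventually (\<lambda>t. real K * b ^ K * exp (- t) < \<eta>) at_top"
    using assms by (rule order_tendstoD)
  then show ?thesis
  proof eventually_elim
    case (elim t)
    have "real k * b ^ k * exp (- t) \<le> real K * b ^ K * exp (- t)" if "k \<le> K" for k
      using that b_ge_1 by (intro mult_right_mono mult_mono power_increasing) auto
    then show ?case
      using partial_sum_conv_iter_exp_density_le_exp_neg elim by (meson less_imp_le order_trans)
  qed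
qed

lemma conv_iter_phi_minus_const:
  "conv_iter k (\<lambda>u. phi u - c) t = phi t - (\<Sum>i<k. conv_iter i exp_density t) - c"
  using conv_iter_diff[OF bdd_meas_phi bdd_meas_const, of k c] phi_eq_partial_sum_plus_conv_iter[of t k]
  by (simp add: conv_iter_const)

lemma bdd_meas_pos_part_phi_minus: "bdd_meas (\<lambda>u. max 0 (phi u - c)) (phi_sup + \<bar>c\<bar>)"
proof (rule bdd_measI)
  show "\<bar>max 0 (phi u - c)\<bar> \<le> phi_sup + \<bar>c\<bar>" for u
    using phi_nonneg[of u] phi_le_sup[of u] abs_ge_self[of c] abs_ge_minus_self[of c] by (auto simp: max_def)
qed measurable

lemma bdd_meas_pos_part_minus_phi: "bdd_meas (\<lambda>u. max 0 (c - phi u)) (phi_sup + \<bar>c\<bar>)"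
proof (rule bdd_measI)
  show "\<bar>max 0 (c - phi u)\<bar> \<le> phi_sup + \<bar>c\<bar>" for u
    using phi_nonneg[of u] phi_le_sup[of u] abs_ge_self[of c] abs_ge_minus_self[of c] by (auto simp: max_def)
qed measurable

lemma conv_iter_pos_parts_phi:
  "conv_iter k (\<lambda>u. max 0 (phi u - c)) t - conv_iter k (\<lambda>u. max 0 (c - phi u)) t
    = phi t - (\<Sum>i<k. conv_iter i exp_density t) - c"
proof -
  have "(\<lambda>u. max 0 (phi u - c) - max 0 (c - phi u)) = (\<lambda>u. phi u - c)"
    by (auto simp: fun_eq_iff max_def)
  then show ?thesis
    using conv_iter_diff[OF bdd_meas_pos_part_phi_minus[of c] bdd_meas_pos_part_minus_phi[of c], where k=k]
      conv_iter_phi_minus_const[where k=k and c=c and t=t] by metis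
qed

lemma frequently_conv_iter_pos_part_limsup_minus_phi_small:
  assumes "0 < \<eta>"
  shows "frequently (\<lambda>t. \<forall>k\<le>K. conv_iter k (\<lambda>u. max 0 (phi_limsup - phi u)) t < \<eta>) at_top"
proof -
  define e where "e = \<eta> / 8"
  have e: "0 < e" using assms by (simp add: e_def)
  have "eventually (\<lambda>u. max 0 (phi u - phi_limsup) \<le> e) at_top"
    using eventually_phi_le_limsup[OF e] by eventually_elim (use e in simp)
  then have "eventually (\<lambda>t. \<forall>k\<le>K. conv_iter k (\<lambda>u. max 0 (phi u - phi_limsup)) t \<le> 2 * e) at_top"
    by (rule eventually_conv_iter_le[OF bdd_meas_pos_part_phi_minus e])
  moreover have "eventually (\<lambda>t. \<forall>k\<le>K. (\<Sum>i<k. conv_iter i exp_density t) \<le> 2 * e) at_top"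
    using e by (intro eventually_partial_sum_conv_iter_exp_density_le) simp
  ultimately have "eventually (\<lambda>t. \<forall>k\<le>K. conv_iter k (\<lambda>u. max 0 (phi u - phi_limsup)) t \<le> 2 * e
      \<and> (\<Sum>i<k. conv_iter i exp_density t) \<le> 2 * e) at_top"
    by eventually_elim blast
  from frequently_eventually_conj[OF frequently_phi_ge_limsup[OF e] this]
  show ?thesis
  proof (rule frequently_elim1)
    fix t assume t: "(\<forall>k\<le>K. conv_iter k (\<lambda>u. max 0 (phi u - phi_limsup)) t \<le> 2 * e
      \<and> (\<Sum>i<k. conv_iter i exp_density t) \<le> 2 * e) \<and> phi_limsup - e \<le> phi t"
    show "\<forall>k\<le>K. conv_iter k (\<lambda>u. max 0 (phi_limsup - phi u)) t < \<eta>"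
    proof (intro allI impI)
      fix k assume "k \<le> K"
      with t have "conv_iter k (\<lambda>u. max 0 (phi u - phi_limsup)) t \<le> 2 * e"
        "(\<Sum>i<k. conv_iter i exp_density t) \<le> 2 * e"
        by auto
      with t conv_iter_pos_parts_phi[of k phi_limsup t] e
      show "conv_iter k (\<lambda>u. max 0 (phi_limsup - phi u)) t < \<eta>"
        by (simp add: e_def)
    qed
  qed
qed

lemma frequently_conv_iter_pos_part_phi_minus_liminf_small:
  assumes "0 < \<eta>"
  shows "frequently (\<lambda>t. \<forall>k\<le>K. conv_iter k (\<lambda>u. max 0 (phi u - phi_liminf)) t < \<eta>) at_top"
proof -
  define e where "e = \<eta> / 4"
  have e: "0 < e" using assms by (simp add: e_def)
  have "eventually (\<lambda>u. max 0 (phi_liminf - phi u) \<le> e) at_top"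
    using eventually_phi_ge_liminf[OF e] by eventually_elim (use e in simp)
  then have "eventually (\<lambda>t. \<forall>k\<le>K. conv_iter k (\<lambda>u. max 0 (phi_liminf - phi u)) t \<le> 2 * e) at_top"
    by (rule eventually_conv_iter_le[OF bdd_meas_pos_part_minus_phi e])
  from frequently_eventually_conj[OF frequently_phi_le_liminf[OF e] this]
  show ?thesis
  proof (rule frequently_elim1)
    fix t assume t: "(\<forall>k\<le>K. conv_iter k (\<lambda>u. max 0 (phi_liminf - phi u)) t \<le> 2 * e) \<and> phi t \<le> phi_liminf + e"
    have "0 \<le> (\<Sum>i<k. conv_iter i exp_density t)" for k
      by (intro sum_nonneg conv_iter_nonneg[OF exp_density_series_facts(1,2)])
    show "\<forall>k\<le>K. conv_iter k (\<lambda>u. max 0 (phi u - phi_liminf)) t < \<eta>"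
    proof (intro allI impI)
      fix k assume "k \<le> K"
      with t have "conv_iter k (\<lambda>u. max 0 (phi_liminf - phi u)) t \<le> 2 * e"
        by auto
      with t conv_iter_pos_parts_phi[of k phi_liminf t] e \<open>0 \<le> (\<Sum>i<k. conv_iter i exp_density t)\<close>
      show "conv_iter k (\<lambda>u. max 0 (phi u - phi_liminf)) t < \<eta>"
        by (simp add: e_def)
    qed
  qed
qed

section \<open>Sums of support points\<close>

definition supp :: "real set" where "supp = {x. \<forall>r>0. emeasure rho (ball x r) \<noteq> 0}"

lemma AE_in_supp: "AE x in rho. x \<in> supp"
proof -
  define I where "I = {(q::rat, r::rat). 0 < r \<and> emeasure rho (ball (of_rat q) (of_rat r)) = 0}"
  define N where "N = (\<Union>i\<in>I. ball (of_rat (fst i)) (of_rat (snd i)) :: real set)"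
  have "countable I"
    by (rule countable_subset[of _ UNIV]) auto
  then have N: "N \<in> null_sets rho"
    unfolding N_def by (rule null_sets_UN') (auto simp: I_def null_sets_def sets_rho)
  show ?thesis
  proof (rule AE_I'[OF N], safe)
    fix x assume "x \<notin> supp"
    then obtain r where r: "r > 0" "emeasure rho (ball x r) = 0" by (auto simp: supp_def)
    obtain r' :: rat where r': "r / 4 < of_rat r'" "of_rat r' < r / 2"
      using of_rat_dense[of "r/4" "r/2"] r by auto
    obtain q :: rat where q: "x - r / 4 < of_rat q" "of_rat q < x + r / 4"
      using of_rat_dense[of "x - r/4" "x + r/4"] r by auto
    have sub: "ball (of_rat q) (of_rat r') \<subseteq> ball x r"
      using q r' by (auto simp: ball_def dist_real_def)
    have "emeasure rho (ball (of_rat q) (of_rat r')) \<le> emeasure rho (ball x r)"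
      by (rule emeasure_mono[OF sub]) (simp add: sets_rho)
    then have "emeasure rho (ball (of_rat q) (of_rat r')) = 0" using r by simp
    moreover have "0 < r'" using r' r
      by (metis of_rat_less of_rat_0 order.strict_trans zero_less_divide_iff zero_less_numeral)
    ultimately have "(q, r') \<in> I" by (simp add: I_def)
    moreover have "x \<in> ball (of_rat q) (of_rat r')"
      using q r' by (auto simp: ball_def dist_real_def)
    ultimately show "x \<in> N" unfolding N_def by force
  qed
qed

lemma supp_nonneg: "x \<in> supp \<Longrightarrow> 0 \<le> x"
proof (rule ccontr)
  assume x: "x \<in> supp" "\<not> 0 \<le> x"
  have N: "{y \<in> space rho. \<not> y > 0} \<in> null_sets rho"
    using AE_pos by (subst AE_iff_null[symmetric]) (auto simp: sets_rho)
  have sub: "ball x (-x) \<subseteq> {y \<in> space rho. \<not> y > 0}"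
    using x by (auto simp: ball_def dist_real_def space_rho)
  have "ball x (-x) \<in> null_sets rho"
    by (rule null_sets_subset[OF N _ sub]) (simp add: sets_rho)
  then show False using x by (auto simp: supp_def null_sets_def)
qed

lemma supp_nonempty: "supp \<noteq> {}"
proof
  assume "supp = {}"
  with AE_in_supp have "AE x in rho. False" by simp
  then show False by (simp add: AE_False emeasure_space_1)
qed

primrec supp_sums :: "nat \<Rightarrow> real set" where
  "supp_sums 0 = {0}"
| "supp_sums (Suc k) = {p + x |p x. p \<in> supp_sums k \<and> x \<in> supp}"

lemma supp_sums_add: "u \<in> supp_sums i \<Longrightarrow> v \<in> supp_sums j \<Longrightarrow> u + v \<in> supp_sums (i + j)"
proof (induction j arbitrary: v)
  case (Suc j)
  then obtain v' x where v: "v = v' + x" "v' \<in> supp_sums j" "x \<in> supp" by auto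
  have "u + v' \<in> supp_sums (i + j)" by (rule Suc.IH[OF Suc.prems(1) v(2)])
  moreover have "u + v = (u + v') + x" using v by (simp add: add.assoc)
  ultimately show ?case using v(3) by (simp only: add_Suc_right supp_sums.simps) blast
qed simp

lemma supp_sums_nonneg: "u \<in> supp_sums k \<Longrightarrow> 0 \<le> u"
proof (induction k arbitrary: u)
  case (Suc k)
  then obtain u' x where "u = u' + x" "u' \<in> supp_sums k" "x \<in> supp" by auto
  then show ?case using Suc.IH supp_nonneg by (simp add: add_nonneg_nonneg)
qed simp

lemma supp_subset_supp_sums_1: "supp \<subseteq> supp_sums 1"
  by auto

definition supp_diffs :: "real set" where
  "supp_diffs = {p - q |p q i j. p \<in> supp_sums i \<and> q \<in> supp_sums j}"

lemma supp_diffs_diff: "d1 \<in> supp_diffs \<Longrightarrow> d2 \<in> supp_diffs \<Longrightarrow> d1 - d2 \<in> supp_diffs"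
proof -
  assume "d1 \<in> supp_diffs" "d2 \<in> supp_diffs"
  then obtain p1 q1 i1 j1 p2 q2 i2 j2 where
    "p1 \<in> supp_sums i1" "q1 \<in> supp_sums j1" "d1 = p1 - q1" "p2 \<in> supp_sums i2" "q2 \<in> supp_sums j2" "d2 = p2 - q2"
    unfolding supp_diffs_def by blast
  moreover have "d1 - d2 = (p1 + q2) - (q1 + p2)" using calculation by simp
  ultimately show ?thesis
    unfolding supp_diffs_def by (blast intro: supp_sums_add)
qed

lemma zero_in_supp_diffs: "0 \<in> supp_diffs"
  unfolding supp_diffs_def by (rule CollectI, intro exI[of _ 0]) simp

text \<open>This is where the non-lattice hypothesis enters.\<close>

lemma small_supp_diff:
  assumes "\<not> lattice_law rho" "0 < \<delta>"
  shows "\<exists>i j p q. p \<in> supp_sums i \<and> q \<in> supp_sums j \<and> 0 < p - q \<and> p - q < \<delta>"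
proof (rule ccontr)
  assume "\<not> ?thesis"
  then have "\<delta> \<le> d" if "d \<in> supp_diffs" "0 < d" for d
    using that unfolding supp_diffs_def by force
  then obtain h where h: "0 < h" "\<And>d. d \<in> supp_diffs \<Longrightarrow> \<exists>k::int. d = of_int k * h"
    using discrete_subgroup_real_cyclic[OF zero_in_supp_diffs supp_diffs_diff assms(2)] by blast
  obtain s0 where s0: "s0 \<in> supp" using supp_nonempty by blast
  have "\<exists>k::int. x = s0 + h * of_int k" if "x \<in> supp" for x
  proof -
    have "x - s0 \<in> supp_diffs"
      using that s0 supp_subset_supp_sums_1 unfolding supp_diffs_def by blast
    then obtain k :: int where "x - s0 = of_int k * h" using h(2) by blast
    then show ?thesis by (intro exI[of _ k]) (simp add: algebra_simps)
  qed
  then have "AE x in rho. \<exists>k::int. x = s0 + h * of_int k"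
    by (rule eventually_mono[OF AE_in_supp])
  with h(1) have "lattice_law rho"
    unfolding lattice_law_def by blast
  with assms(1) show False ..
qed

lemma supp_sums_eventually_dense:
  assumes "\<not> lattice_law rho" "0 < \<delta>"
  shows "\<exists>a. \<forall>y\<ge>a. \<exists>k. \<exists>u\<in>supp_sums k. \<bar>u - y\<bar> < \<delta>"
proof -
  define S where "S = (\<Union>k. supp_sums k)"
  obtain i j p q where "p \<in> supp_sums i" "q \<in> supp_sums j" "0 < p - q" "p - q < \<delta>"
    using small_supp_diff[OF assms] by blast
  then have "\<exists>a. \<forall>y\<ge>a. \<exists>u\<in>S. \<bar>u - y\<bar> < \<delta>"
    by (intro additive_monoid_eventually_dense[of S p q])
       (auto simp: S_def supp_sums_nonneg intro: supp_sums_add exI[of _ 0])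
  then show ?thesis by (auto simp: S_def)
qed

lemma supp_sums_cover_window:
  assumes "\<not> lattice_law rho" "0 < \<delta>" "0 \<le> T"
  obtains N cc kk a where "\<And>i. i \<le> (N::nat) \<Longrightarrow> cc i \<in> supp_sums (kk i)"
    "\<And>y. a \<le> y \<Longrightarrow> y \<le> a + T \<Longrightarrow> \<exists>i\<le>N. y + \<delta> / 4 < cc i \<and> cc i + \<delta> / 4 < y + \<delta>"
proof -
  obtain a where a: "\<And>y. y \<ge> a \<Longrightarrow> \<exists>k. \<exists>u\<in>supp_sums k. \<bar>u - y\<bar> < \<delta> / 8"
    using supp_sums_eventually_dense[OF assms(1), of "\<delta> / 8"] assms(2) by auto
  define grid where "grid i = a + \<delta> / 2 + real i * (\<delta> / 8)" for i :: nat
  have "a \<le> grid i" for i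
    using assms(2) by (simp add: grid_def)
  then have "\<forall>i. \<exists>k u. u \<in> supp_sums k \<and> \<bar>u - grid i\<bar> < \<delta> / 8"
    using a by blast
  then obtain kk cc where cc: "\<And>i. cc i \<in> supp_sums (kk i)" "\<And>i. \<bar>cc i - grid i\<bar> < \<delta> / 8"
    by metis
  define N where "N = nat \<lceil>T / (\<delta> / 8)\<rceil>"
  show ?thesis
  proof (rule that[of N cc kk a])
    fix y assume y: "a \<le> y" "y \<le> a + T"
    obtain i :: nat where i: "real i * (\<delta> / 8) \<le> y - a" "y - a < real i * (\<delta> / 8) + \<delta> / 8"
      using nat_multiple_le_lt[of "\<delta> / 8" "y - a"] assms(2) y by auto
    have "real i \<le> (y - a) / (\<delta> / 8)"
      using i assms(2) by (simp add: field_simps)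
    also have "\<dots> \<le> T / (\<delta> / 8)"
      using y assms(2) by (intro divide_right_mono) auto
    finally have "i \<le> N"
      unfolding N_def by linarith
    moreover have "y + \<delta> / 4 < cc i" "cc i + \<delta> / 4 < y + \<delta>"
      using cc(2)[of i] i unfolding grid_def abs_less_iff by auto
    ultimately show "\<exists>i\<le>N. y + \<delta> / 4 < cc i \<and> cc i + \<delta> / 4 < y + \<delta>" by blast
  qed (use cc in auto)
qed

lemma bdd_meas_indicator_ball: "bdd_meas (indicator (ball c r) :: real \<Rightarrow> real) 1"
  by (rule bdd_measI[OF borel_measurable_indicator]) (auto simp: indicator_def)

lemma indicator_ball_le_indicator_ball:
  fixes c x y :: real
  assumes "y \<in> ball x (r / 2)"
  shows "indicator (ball c (r / 2)) s \<le> (indicator (ball (c + y - x) r) s :: real)"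
proof -
  have "\<bar>c + y - x - s\<bar> \<le> \<bar>c - s\<bar> + \<bar>y - x\<bar>"
    using abs_triangle_ineq[of "c - s" "y - x"] by (simp add: algebra_simps)
  moreover have "\<bar>y - x\<bar> < r / 2"
    using assms by (simp add: dist_real_def abs_minus_commute)
  ultimately have "\<bar>c + y - x - s\<bar> < r" if "\<bar>c - s\<bar> < r / 2"
    using that by linarith
  then show ?thesis by (auto simp: indicator_def dist_real_def)
qed

lemma conv_iter_indicator_ball_pos:
  "u \<in> supp_sums k \<Longrightarrow> 0 < r \<Longrightarrow> 0 < conv_iter k (indicator (ball (t - u) r)) t"
proof (induction k arbitrary: u r t)
  case (Suc k)
  then obtain u' x where ux: "u = u' + x" "u' \<in> supp_sums k" "x \<in> supp" by auto
  define f :: "real \<Rightarrow> real" where "f = indicator (ball (t - u) r)"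
  have "(\<integral>y. 0 \<partial>rho) < (\<integral>y. tilt y * conv_iter k f (t - y) \<partial>rho)"
  proof (rule integral_less_AE[where A="ball x (r/2)"])
    show "emeasure rho (ball x (r / 2)) \<noteq> 0" using ux(3) Suc.prems by (auto simp: supp_def)
    show "AE y in rho. y \<in> ball x (r / 2) \<longrightarrow> 0 \<noteq> tilt y * conv_iter k f (t - y)"
    proof (intro AE_I2 impI)
      fix y assume y: "y \<in> ball x (r / 2)"
      have "0 < conv_iter k (indicator (ball ((t - y) - u') (r / 2))) (t - y)"
        by (rule Suc.IH[OF ux(2)]) (use Suc.prems in simp)
      also have "\<dots> \<le> conv_iter k f (t - y)"
      proof (rule conv_iter_mono[OF bdd_meas_indicator_ball])
        show "bdd_meas f 1" by (simp add: f_def bdd_meas_indicator_ball)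
        show "indicator (ball (t - y - u') (r / 2)) s \<le> f s" for s
          using indicator_ball_le_indicator_ball[OF y, of "t - y - u'" s] ux(1) by (simp add: f_def algebra_simps)
      qed
      finally show "0 \<noteq> tilt y * conv_iter k f (t - y)" using tilt_pos[of y] by simp
    qed
    show "AE y in rho. 0 \<le> tilt y * conv_iter k f (t - y)"
      using tilt_pos conv_iter_nonneg[OF bdd_meas_indicator_ball]
      by (auto intro!: AE_I2 simp: f_def less_imp_le)
  qed (auto simp: sets_rho f_def intro: integrable_conv_bdd_meas[OF bdd_meas_conv_iter[OF bdd_meas_indicator_ball]])
  then show ?case by (simp add: conv_iter_Suc conv_def f_def)
qed simp

lemma conv_iter_ge_on_ball:
  assumes D: "bdd_meas D B" "\<And>s. 0 \<le> D s" and ge: "\<And>s. s \<in> ball (t - c) r \<Longrightarrow> \<epsilon> \<le> D s"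
  shows "\<epsilon> * conv_iter k (indicator (ball (- c) r)) 0 \<le> conv_iter k D t"
proof -
  have shift: "indicator (ball (t - c) r) = (\<lambda>s. indicator (ball (- c) r) (s - t) :: real)"
    by (auto simp: fun_eq_iff indicator_def dist_real_def)
  have "\<epsilon> * indicator (ball (t - c) r) s \<le> D s" for s
    using ge[of s] D(2)[of s] by (cases "s \<in> ball (t - c) r") auto
  then have "conv_iter k (\<lambda>s. \<epsilon> * indicator (ball (t - c) r) s) t \<le> conv_iter k D t"
    by (intro conv_iter_mono[OF _ D(1)] bdd_measI) (auto simp: indicator_def)
  then show ?thesis
    by (simp add: conv_iter_cmult shift conv_iter_shift')
qed

end

section \<open>The key renewal theorem\<close>

locale tilted_renewal_nonlattice = tilted_renewal +
  assumes nonlattice: "\<not> lattice_law rho"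
begin

text \<open>If \<open>F\<^sup>*\<^sup>k \<star> D\<close> is small at \<open>t\<close> for all \<open>k \<le> K\<close>, then \<open>D (t - \<cdot>)\<close> is small somewhere in
  every window \<open>[y + a, y + a + \<delta>]\<close>, \<open>0 \<le> y \<le> T\<close>: each window contains a ball around a point of
  some \<open>supp_sums k\<close>, which carries \<open>F\<^sup>*\<^sup>k\<close>-mass at least \<open>\<pi>\<close>.\<close>

lemma small_somewhere_in_windows:
  assumes "0 < \<delta>" "0 \<le> T"
  obtains a \<pi> K where "0 < \<pi>"
    "\<And>t D B \<epsilon> y. bdd_meas D B \<Longrightarrow> (\<And>u. 0 \<le> D u) \<Longrightarrow> (\<And>k. k \<le> K \<Longrightarrow> conv_iter k D t < \<epsilon> * \<pi>) \<Longrightarrow>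
      0 \<le> y \<Longrightarrow> y \<le> T \<Longrightarrow> \<exists>y'. y + a \<le> y' \<and> y' \<le> y + a + \<delta> \<and> D (t - y') < \<epsilon>"
proof -
  obtain N cc kk a where cc: "\<And>i. i \<le> (N::nat) \<Longrightarrow> cc i \<in> supp_sums (kk i)" and
    cover: "\<And>y. a \<le> y \<Longrightarrow> y \<le> a + T \<Longrightarrow> \<exists>i\<le>N. y + \<delta> / 4 < cc i \<and> cc i + \<delta> / 4 < y + \<delta>"
    using supp_sums_cover_window[OF nonlattice assms] by metis
  define mass where "mass i = conv_iter (kk i) (indicator (ball (- cc i) (\<delta> / 4))) 0" for i
  have mass_pos: "0 < mass i" if "i \<le> N" for i
    using conv_iter_indicator_ball_pos[OF cc[OF that], of "\<delta> / 4" 0] assms(1) by (simp add: mass_def)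
  define \<pi> where "\<pi> = Min (mass ` {..N})"
  have \<pi>_pos: "0 < \<pi>" unfolding \<pi>_def by (subst Min_gr_iff) (use mass_pos in auto)
  have \<pi>_le: "\<pi> \<le> mass i" if "i \<le> N" for i unfolding \<pi>_def using that by (intro Min_le) auto
  define K where "K = Max (kk ` {..N})"
  have K: "kk i \<le> K" if "i \<le> N" for i unfolding K_def using that by (intro Max_ge) auto
  show ?thesis
  proof (rule that[OF \<pi>_pos])
    fix t D B \<epsilon> y
    assume D: "bdd_meas D B" "\<And>u. 0 \<le> D u" and small: "\<And>k. k \<le> K \<Longrightarrow> conv_iter k D t < \<epsilon> * \<pi>"
      and y: "0 \<le> y" "y \<le> T"
    obtain i where i: "i \<le> N" "y + a + \<delta> / 4 < cc i" "cc i + \<delta> / 4 < y + a + \<delta>"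
      using cover[of "y + a"] y by auto
    show "\<exists>y'. y + a \<le> y' \<and> y' \<le> y + a + \<delta> \<and> D (t - y') < \<epsilon>"
    proof (rule ccontr)
      assume "\<not> ?thesis"
      then have "\<epsilon> \<le> D s" if "s \<in> ball (t - cc i) (\<delta> / 4)" for s
        using that i by (auto simp: dist_real_def abs_less_iff not_less dest: spec[of _ "t - s"])
      from conv_iter_ge_on_ball[OF D this, where k="kk i"]
      have "\<epsilon> * mass i \<le> conv_iter (kk i) D t" by (simp add: mass_def)
      moreover have "conv_iter (kk i) D t < \<epsilon> * \<pi>" using small K[OF i(1)] by blast
      moreover have "0 \<le> conv_iter (kk i) D t" by (rule conv_iter_nonneg[OF D])
      moreover have "\<epsilon> * \<pi> \<le> \<epsilon> * mass i" if "0 \<le> \<epsilon>"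
        using mult_left_mono[OF \<pi>_le[OF i(1)] that] .
      moreover have "\<epsilon> * \<pi> < 0" if "\<epsilon> < 0"
        using that \<pi>_pos by (simp add: mult_neg_pos)
      ultimately show False by linarith
    qed
  qed
qed

lemma frequently_small_somewhere_in_windows:
  assumes "0 < \<delta>" "0 \<le> T" "0 < \<epsilon>" and D: "bdd_meas D B" "\<And>u. 0 \<le> D u"
    and small: "\<And>K \<eta>. 0 < \<eta> \<Longrightarrow> frequently (\<lambda>t. \<forall>k\<le>K. conv_iter k D t < \<eta>) at_top"
  obtains a where "frequently (\<lambda>t. \<forall>y. 0 \<le> y \<and> y \<le> T \<longrightarrow> (\<exists>y'. y + a \<le> y' \<and> y' \<le> y + a + \<delta> \<and> D (t - y') < \<epsilon>)) at_top"
proof -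
  obtain a \<pi> K where \<pi>: "0 < \<pi>" and window:
    "\<And>t D B \<epsilon> y. bdd_meas D B \<Longrightarrow> (\<And>u. 0 \<le> D u) \<Longrightarrow> (\<And>k. k \<le> K \<Longrightarrow> conv_iter k D t < \<epsilon> * \<pi>) \<Longrightarrow>
      0 \<le> y \<Longrightarrow> y \<le> T \<Longrightarrow> \<exists>y'. y + a \<le> y' \<and> y' \<le> y + a + \<delta> \<and> D (t - y') < \<epsilon>"
    using small_somewhere_in_windows[OF assms(1,2)] by metis
  have "frequently (\<lambda>t. \<forall>k\<le>K. conv_iter k D t < \<epsilon> * \<pi>) at_top"
    using small \<pi> assms(3) by simp
  then show ?thesis
    by (intro that[of a]) (erule frequently_elim1, use window[OF D] in blast)
qed

text \<open>Moving from the point \<open>t - y'\<close> found in the window back to \<open>\<tau> - y\<close> costs at most a factor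
  \<open>e\<^sup>\<delta>\<close>, because \<open>e\<^sup>t \<phi>(t)\<close> is nondecreasing.\<close>

lemma frequently_phi_ge_on_windows:
  assumes "0 < \<epsilon>" "0 < \<delta>" "0 \<le> T"
  shows "frequently (\<lambda>\<tau>. \<forall>y. 0 \<le> y \<and> y \<le> T \<longrightarrow> exp (- \<delta>) * (phi_limsup - \<epsilon>) \<le> phi (\<tau> - y)) at_top"
proof -
  obtain a where fr: "frequently (\<lambda>t. \<forall>y. 0 \<le> y \<and> y \<le> T \<longrightarrow>
      (\<exists>y'. y + a \<le> y' \<and> y' \<le> y + a + \<delta> \<and> max 0 (phi_limsup - phi (t - y')) < \<epsilon>)) at_top"
    by (rule frequently_small_somewhere_in_windows[OF assms(2,3,1) bdd_meas_pos_part_minus_phi _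
          frequently_conv_iter_pos_part_limsup_minus_phi_small]) auto
  show ?thesis
    unfolding frequently_at_top_iff
  proof
    fix s
    obtain t where "s + a \<le> t" and t: "\<forall>y. 0 \<le> y \<and> y \<le> T \<longrightarrow>
        (\<exists>y'. y + a \<le> y' \<and> y' \<le> y + a + \<delta> \<and> max 0 (phi_limsup - phi (t - y')) < \<epsilon>)"
      using fr unfolding frequently_at_top_iff by blast
    have "exp (- \<delta>) * (phi_limsup - \<epsilon>) \<le> phi (t - a - y)" if y: "0 \<le> y" "y \<le> T" for y
    proof -
      obtain y' where y': "y + a \<le> y'" "y' \<le> y + a + \<delta>" "phi_limsup - \<epsilon> < phi (t - y')"
        using t y by force
      have "phi (t - y') \<le> exp ((t - a - y) - (t - y')) * phi (t - a - y)"
        by (rule phi_le_exp_mult) (use y' in simp)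
      also have "\<dots> \<le> exp \<delta> * phi (t - a - y)"
        using y' phi_nonneg by (intro mult_right_mono) auto
      finally show ?thesis
        using y'(3) by (simp add: exp_minus field_simps)
    qed
    with \<open>s + a \<le> t\<close> show "\<exists>\<tau>\<ge>s. \<forall>y. 0 \<le> y \<and> y \<le> T \<longrightarrow> exp (- \<delta>) * (phi_limsup - \<epsilon>) \<le> phi (\<tau> - y)"
      by (intro exI[of _ "t - a"]) auto
  qed
qed

lemma frequently_phi_le_on_windows:
  assumes "0 < \<epsilon>" "0 < \<delta>" "0 \<le> T"
  shows "frequently (\<lambda>\<tau>. \<forall>y. 0 \<le> y \<and> y \<le> T \<longrightarrow> phi (\<tau> - y) \<le> exp \<delta> * (phi_liminf + \<epsilon>)) at_top"
proof -
  obtain a where fr: "frequently (\<lambda>t. \<forall>y. 0 \<le> y \<and> y \<le> T \<longrightarrow>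
      (\<exists>y'. y + a \<le> y' \<and> y' \<le> y + a + \<delta> \<and> max 0 (phi (t - y') - phi_liminf) < \<epsilon>)) at_top"
    by (rule frequently_small_somewhere_in_windows[OF assms(2,3,1) bdd_meas_pos_part_phi_minus _
          frequently_conv_iter_pos_part_phi_minus_liminf_small]) auto
  show ?thesis
    unfolding frequently_at_top_iff
  proof
    fix s
    obtain t where "s + a + \<delta> \<le> t" and t: "\<forall>y. 0 \<le> y \<and> y \<le> T \<longrightarrow>
        (\<exists>y'. y + a \<le> y' \<and> y' \<le> y + a + \<delta> \<and> max 0 (phi (t - y') - phi_liminf) < \<epsilon>)"
      using fr unfolding frequently_at_top_iff by blast
    have "phi (t - a - \<delta> - y) \<le> exp \<delta> * (phi_liminf + \<epsilon>)" if y: "0 \<le> y" "y \<le> T" for y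
    proof -
      obtain y' where y': "y + a \<le> y'" "y' \<le> y + a + \<delta>" "phi (t - y') < phi_liminf + \<epsilon>"
        using t y by force
      have "phi (t - a - \<delta> - y) \<le> exp ((t - y') - (t - a - \<delta> - y)) * phi (t - y')"
        by (rule phi_le_exp_mult) (use y' in simp)
      also have "\<dots> \<le> exp \<delta> * phi (t - y')"
        using y' phi_nonneg by (intro mult_right_mono) auto
      finally show ?thesis
        using y'(3) by (smt (verit) exp_gt_zero mult_left_mono)
    qed
    with \<open>s + a + \<delta> \<le> t\<close> show "\<exists>\<tau>\<ge>s. \<forall>y. 0 \<le> y \<and> y \<le> T \<longrightarrow> phi (\<tau> - y) \<le> exp \<delta> * (phi_liminf + \<epsilon>)"
      by (intro exI[of _ "t - a - \<delta>"]) auto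
  qed
qed

lemma phi_limsup_mult_mu_le_1: "phi_limsup * mu \<le> 1"
proof -
  define h where "h n = inverse (real (Suc n))" for n
  have h: "0 < h n" for n by (simp add: h_def)
  define F where "F n = exp (- h n) * max 0 (exp (- h n) * (phi_limsup - h n)) * (trunc_mean (real (Suc n)) - h n)" for n
  have "F n \<le> 1" for n
  proof -
    obtain \<tau> where \<tau>: "\<And>y. 0 \<le> y \<Longrightarrow> y \<le> real (Suc n) \<Longrightarrow> exp (- h n) * (phi_limsup - h n) \<le> phi (\<tau> - y)"
      using frequently_ex[OF frequently_phi_ge_on_windows[OF h[of n] h[of n], of "real (Suc n)"]] by auto
    have "max 0 (exp (- h n) * (phi_limsup - h n)) \<le> phi (\<tau> - y)" if "0 \<le> y" "y \<le> real (Suc n)" for y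
      using \<tau>[OF that] phi_nonneg[of "\<tau> - y"] by simp
    from trunc_mean_le_of_phi_ge_on_window[OF h _ this] show ?thesis
      by (simp add: F_def)
  qed
  moreover have "F \<longlonglongrightarrow> exp (- 0) * max 0 (exp (- 0) * (phi_limsup - 0)) * (mu - 0)"
    unfolding F_def[abs_def] h_def by (intro tendsto_intros LIMSEQ_inverse_real_of_nat trunc_mean_Suc_tendsto)
  ultimately show ?thesis
    using phi_limsup_nonneg LIMSEQ_le_const2[of F] by simp
qed

lemma one_le_phi_liminf_mult_mu: "1 \<le> phi_liminf * mu"
proof -
  define h where "h n = inverse (real (Suc n))" for n
  have h: "0 < h n" for n by (simp add: h_def)
  define G where "G n = exp (h n) * (exp (h n) * (phi_liminf + h n) * (mu + h n)
      + phi_sup * (mu - trunc_mean (real (Suc n)) + h n))" for n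
  have "1 - h n \<le> G n" for n
  proof -
    obtain \<tau> where "real (Suc n) \<le> \<tau>" and \<tau>: "\<forall>y. 0 \<le> y \<and> y \<le> real (Suc n) \<longrightarrow> phi (\<tau> - y) \<le> exp (h n) * (phi_liminf + h n)"
      using frequently_phi_le_on_windows[OF h[of n] h[of n], of "real (Suc n)"] unfolding frequently_at_top_iff by fastforce
    have "exp (- \<tau>) \<le> h n"
    proof -
      have "real (Suc n) \<le> exp \<tau>"
        using exp_ge_add_one_self[of \<tau>] \<open>real (Suc n) \<le> \<tau>\<close> by linarith
      then show ?thesis
        by (simp add: h_def exp_minus le_imp_inverse_le)
    qed
    then have "1 - h n \<le> exp_cdf \<tau>"
      using \<open>real (Suc n) \<le> \<tau>\<close> by (simp add: exp_cdf_def)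
    also have "\<dots> \<le> G n"
      unfolding G_def using h[of n] phi_liminf_nonneg \<tau>
      by (intro exp_cdf_le_of_phi_le_on_window) (auto intro!: mult_nonneg_nonneg)
    finally show ?thesis .
  qed
  moreover have "G \<longlonglongrightarrow> exp 0 * (exp 0 * (phi_liminf + 0) * (mu + 0) + phi_sup * (mu - mu + 0))"
    unfolding G_def[abs_def] h_def by (intro tendsto_intros LIMSEQ_inverse_real_of_nat trunc_mean_Suc_tendsto)
  moreover have "(\<lambda>n. 1 - h n) \<longlonglongrightarrow> 1 - 0"
    unfolding h_def by (intro tendsto_intros LIMSEQ_inverse_real_of_nat)
  ultimately show ?thesis
    using LIMSEQ_le[of "\<lambda>n. 1 - h n" 1 G] by simp
qed

theorem phi_tendsto: "(phi \<longlongrightarrow> 1 / mu) at_top"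
proof (rule order_tendstoI)
  fix a assume "a < 1 / mu"
  then have "a * mu < 1"
    using mu_pos by (simp add: field_simps)
  then have "a * mu < phi_liminf * mu"
    using one_le_phi_liminf_mult_mu by linarith
  then have "a < phi_liminf"
    using mu_pos by simp
  then show "eventually (\<lambda>t. a < phi t) at_top"
    using eventually_phi_ge_liminf[of "(phi_liminf - a) / 2"] by (auto elim!: eventually_mono simp: field_simps)
next
  fix a assume "1 / mu < a"
  then have "1 < a * mu"
    using mu_pos by (simp add: field_simps)
  then have "phi_limsup * mu < a * mu"
    using phi_limsup_mult_mu_le_1 by linarith
  then have "phi_limsup < a"
    using mu_pos by simp
  then show "eventually (\<lambda>t. phi t < a) at_top"
    using eventually_phi_le_limsup[of "(a - phi_limsup) / 2"] by (auto elim!: eventually_mono simp: field_simps)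
qed


lemma scaled_sums_asymptotics:
  assumes sums: "\<And>n K. 0 < n \<Longrightarrow> 0 < K \<Longrightarrow> f n K sums (n / K * phi (ln (n / K)))"
  shows "\<forall>\<epsilon>>0. \<exists>R. \<forall>n K. 0 < K \<longrightarrow> R \<le> n / K \<longrightarrow>
    summable (f n K) \<and> \<bar>K / n * (\<Sum>k. f n K k) - 1 / mu\<bar> \<le> \<epsilon>"
proof (intro allI impI)
  fix \<epsilon> :: real assume "0 < \<epsilon>"
  obtain t0 where t0: "\<And>t. t0 \<le> t \<Longrightarrow> \<bar>phi t - 1 / mu\<bar> < \<epsilon>"
    using tendstoD[OF phi_tendsto \<open>0 < \<epsilon>\<close>] unfolding eventually_at_top_linorder dist_real_def by blast
  have "0 < n \<and> t0 \<le> ln (n / K)" if "0 < K" "exp t0 \<le> n / K" for n K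
    using that by (smt (verit) exp_gt_zero zero_less_divide_iff ln_ge_iff)
  with sums show "\<exists>R. \<forall>n K. 0 < K \<longrightarrow> R \<le> n / K \<longrightarrow>
      summable (f n K) \<and> \<bar>K / n * (\<Sum>k. f n K k) - 1 / mu\<bar> \<le> \<epsilon>"
    by (intro exI[of _ "exp t0"]) (auto simp: sums_iff less_imp_le[OF t0])
qed
end

section \<open>Expected number of heavy vertices\<close>

context tilted_renewal
begin

lemma conv_iter_exp_density_eq:
  assumes P0: "\<And>t. P 0 t = heaviside t" and P_Suc: "\<And>k t. P (Suc k) t = (\<integral>x. P k (t - x) \<partial>rho)"
  shows "conv_iter k exp_density t = exp (- t) * b ^ k * P k t"
proof (induction k arbitrary: t)
  case 0
  then show ?case by (simp add: P0 exp_density_def heaviside_def)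
next
  case (Suc k)
  have "conv_iter (Suc k) exp_density t = (\<integral>x. (exp (- t) * b ^ Suc k) * P k (t - x) \<partial>rho)"
    unfolding conv_iter_Suc conv_def
    by (intro Bochner_Integration.integral_cong refl) (simp add: Suc tilt_def exp_diff exp_minus field_simps)
  also have "\<dots> = exp (- t) * b ^ Suc k * P (Suc k) t"
    by (simp add: P_Suc)
  finally show ?case .
qed

end

lemma measure_pair_sum_le:
  fixes N L :: "real measure"
  assumes "prob_space N" "prob_space L" and sets: "sets N = sets borel" "sets L = sets borel"
  shows "measure (N \<Otimes>\<^sub>M L) {p \<in> space (borel \<Otimes>\<^sub>M borel). fst p + snd p \<le> t} = (\<integral>x. measure L {..t - x} \<partial>N)"
proof -
  interpret N: prob_space N by fact
  interpret L: prob_space L by fact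
  define A where "A = {p \<in> space (borel \<Otimes>\<^sub>M borel). fst p + snd p \<le> (t::real)}"
  have "A \<in> sets (borel \<Otimes>\<^sub>M borel)" unfolding A_def by measurable
  then have "emeasure (N \<Otimes>\<^sub>M L) A = (\<integral>\<^sup>+x. emeasure L (Pair x -` A) \<partial>N)"
    by (intro L.emeasure_pair_measure_alt) (simp add: sets cong: sets_pair_measure_cong)
  also have "\<dots> = (\<integral>\<^sup>+x. ennreal (measure L {..t - x}) \<partial>N)"
  proof (rule nn_integral_cong)
    fix x
    have "Pair x -` A = {..t - x}" by (auto simp: A_def space_pair_measure)
    then show "emeasure L (Pair x -` A) = ennreal (measure L {..t - x})"
      by (simp add: L.emeasure_eq_measure)
  qed
  also have "\<dots> = ennreal (\<integral>x. measure L {..t - x} \<partial>N)"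
  proof (rule nn_integral_eq_integral)
    have "mono (\<lambda>s. measure L {..s})"
      by (auto simp: mono_def sets intro!: L.finite_measure_mono)
    then have "(\<lambda>s. measure L {..s}) \<in> borel_measurable borel"
      by (rule borel_measurable_mono)
    then have "(\<lambda>x. measure L {..t - x}) \<in> borel_measurable N"
      using sets by (simp add: measurable_cong_sets[OF sets(1) refl]) measurable
    then show "integrable N (\<lambda>x. measure L {..t - x})"
      by (intro N.integrable_const_bound[where B=1]) auto
  qed simp
  finally show ?thesis
    by (simp add: A_def measure_def integral_nonneg_AE)
qed

lemma measure_partial_sum_le_Suc:
  fixes X :: "nat \<Rightarrow> 'a \<Rightarrow> real"
  assumes "prob_space M" and indep: "prob_space.indep_vars M (\<lambda>_. borel) X {1..}"
    and law: "\<And>j. 1 \<le> j \<Longrightarrow> distr M borel (X j) = N"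
  shows "measure M {\<omega> \<in> space M. (\<Sum>j\<in>{1..Suc k}. X j \<omega>) \<le> t}
    = (\<integral>x. measure M {\<omega> \<in> space M. (\<Sum>j\<in>{1..k}. X j \<omega>) \<le> t - x} \<partial>N)"
proof -
  interpret M: prob_space M by fact
  define S where "S k \<omega> = (\<Sum>j\<in>{1..k}. X j \<omega>)" for k \<omega>
  have X_meas: "X j \<in> borel_measurable M" if "1 \<le> j" for j
    using indep that unfolding M.indep_vars_def by auto
  have S_meas: "S k \<in> borel_measurable M"
    unfolding S_def[abs_def] by (rule borel_measurable_sum) (use X_meas in auto)
  have N_law: "N = distr M borel (X (Suc k))" using law[of "Suc k"] by simp
  have "M.indep_var borel (X (Suc k)) borel (S k)"
    unfolding S_def[abs_def] by (rule M.indep_vars_sum) (auto intro: M.indep_vars_subset[OF indep])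
  then have joint: "N \<Otimes>\<^sub>M distr M borel (S k) = distr M (borel \<Otimes>\<^sub>M borel) (\<lambda>\<omega>. (X (Suc k) \<omega>, S k \<omega>))"
    unfolding M.indep_var_distribution_eq N_law by simp
  have "{\<omega> \<in> space M. S (Suc k) \<omega> \<le> t} = (\<lambda>\<omega>. (X (Suc k) \<omega>, S k \<omega>)) -` {p \<in> space (borel \<Otimes>\<^sub>M borel). fst p + snd p \<le> t} \<inter> space M"
    by (auto simp: S_def space_pair_measure add.commute)
  then have "measure M {\<omega> \<in> space M. S (Suc k) \<omega> \<le> t}
      = measure (N \<Otimes>\<^sub>M distr M borel (S k)) {p \<in> space (borel \<Otimes>\<^sub>M borel). fst p + snd p \<le> t}"
    unfolding joint using X_meas[of "Suc k"] S_meas by (simp add: measure_distr)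
  also have "\<dots> = (\<integral>x. measure (distr M borel (S k)) {..t - x} \<partial>N)"
    unfolding N_law using X_meas[of "Suc k"] S_meas
    by (intro measure_pair_sum_le M.prob_space_distr) auto
  also have "\<dots> = (\<integral>x. measure M {\<omega> \<in> space M. S k \<omega> \<le> t - x} \<partial>N)"
    using S_meas by (simp add: measure_distr vimage_def Int_def conj_commute)
  finally show ?thesis by (simp add: S_def)
qed

lemma prod_ge_iff_sum_neg_ln_le:
  fixes w :: "nat \<Rightarrow> real" and n K :: real
  assumes "finite J" "\<And>j. j \<in> J \<Longrightarrow> 0 < w j" "0 < n" "0 < K"
  shows "K \<le> n * (\<Prod>j\<in>J. w j) \<longleftrightarrow> (\<Sum>j\<in>J. - ln (w j)) \<le> ln (n / K)"
proof -
  define s where "s = (\<Sum>j\<in>J. - ln (w j))"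
  have "(\<Prod>j\<in>J. w j) = (\<Prod>j\<in>J. exp (ln (w j)))"
    by (rule prod.cong) (simp_all add: assms(2))
  also have "\<dots> = exp (- s)"
    using exp_sum[OF assms(1), of "\<lambda>j. ln (w j)"] by (simp add: s_def sum_negf)
  finally have prod: "(\<Prod>j\<in>J. w j) = exp (- s)" .
  have "K \<le> n * exp (- s) \<longleftrightarrow> K / n \<le> exp (- s)"
    using assms(3) by (simp add: field_simps)
  also have "\<dots> \<longleftrightarrow> ln (K / n) \<le> - s"
    using assms(3,4) by (subst ln_le_cancel_iff[symmetric]) auto
  also have "ln (K / n) = - ln (n / K)"
    using assms(3,4) by (simp add: ln_div)
  finally show ?thesis
    unfolding prod s_def by linarith
qed

lemma AE_component_pos_less_1:
  fixes Vv :: "'a \<Rightarrow> nat \<Rightarrow> real"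
  assumes "prob_space M" "0 < b" and meas: "(\<lambda>\<omega>. Vv \<omega> 0) \<in> borel_measurable M"
    and simplex: "AE \<omega> in M. (\<forall>i<b. Vv \<omega> i \<ge> 0) \<and> (\<Sum>i<b. Vv \<omega> i) = 1"
    and "measure M {\<omega> \<in> space M. Vv \<omega> 0 = 0} = 0" "measure M {\<omega> \<in> space M. Vv \<omega> 0 = 1} = 0"
  shows "AE \<omega> in M. 0 < Vv \<omega> 0 \<and> Vv \<omega> 0 < 1"
proof -
  interpret M: prob_space M by fact
  have "{\<omega> \<in> space M. Vv \<omega> 0 = c} \<in> null_sets M" if "measure M {\<omega> \<in> space M. Vv \<omega> 0 = c} = 0" for c
    using that meas by (auto simp: null_sets_def M.emeasure_eq_measure)
  then have "AE \<omega> in M. Vv \<omega> 0 \<noteq> 0" "AE \<omega> in M. Vv \<omega> 0 \<noteq> 1"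
    using assms(5,6) by (auto intro: AE_I')
  with simplex show ?thesis
  proof eventually_elim
    case (elim \<omega>)
    then have "Vv \<omega> 0 \<le> (\<Sum>i<b. Vv \<omega> i)"
      using \<open>0 < b\<close> by (intro member_le_sum) auto
    with elim \<open>0 < b\<close> show ?case by auto
  qed
qed

lemma exchangeable_component_mean:
  fixes Vv :: "'a \<Rightarrow> nat \<Rightarrow> real"
  assumes "prob_space M" and meas: "\<And>i. i < b \<Longrightarrow> (\<lambda>\<omega>. Vv \<omega> i) \<in> borel_measurable M"
    and simplex: "AE \<omega> in M. (\<forall>i<b. Vv \<omega> i \<ge> 0) \<and> (\<Sum>i<b. Vv \<omega> i) = 1"
    and law: "\<And>i. i < b \<Longrightarrow> distr M borel (\<lambda>\<omega>. Vv \<omega> i) = distr M borel (\<lambda>\<omega>. Vv \<omega> 0)"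
    and "0 < b"
  shows "real b * (\<integral>\<omega>. Vv \<omega> 0 \<partial>M) = 1"
proof -
  interpret M: prob_space M by fact
  have mean: "(\<integral>\<omega>. Vv \<omega> i \<partial>M) = (\<integral>\<omega>. Vv \<omega> 0 \<partial>M)" if "i < b" for i
    using integral_distr[of "\<lambda>\<omega>. Vv \<omega> i" M borel "\<lambda>x. x"] integral_distr[of "\<lambda>\<omega>. Vv \<omega> 0" M borel "\<lambda>x. x"]
      meas[OF that] meas[OF \<open>0 < b\<close>] law[OF that] by simp
  have "AE \<omega> in M. \<bar>Vv \<omega> i\<bar> \<le> 1" if "i < b" for i
    using simplex
  proof eventually_elim
    case (elim \<omega>)
    then have "Vv \<omega> i \<le> (\<Sum>i<b. Vv \<omega> i)"
      using that by (intro member_le_sum) auto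
    with elim that show ?case by auto
  qed
  then have int: "integrable M (\<lambda>\<omega>. Vv \<omega> i)" if "i < b" for i
    using that meas by (intro M.integrable_const_bound[where B=1]) auto
  have "(\<integral>\<omega>. (\<Sum>i<b. Vv \<omega> i) \<partial>M) = (\<integral>\<omega>. 1 \<partial>M)"
    by (rule integral_cong_AE) (use simplex meas in \<open>auto elim: eventually_mono\<close>)
  then have "1 = (\<integral>\<omega>. (\<Sum>i<b. Vv \<omega> i) \<partial>M)"
    by (simp add: M.prob_space)
  also have "\<dots> = (\<Sum>i<b. (\<integral>\<omega>. Vv \<omega> i \<partial>M))"
    by (rule Bochner_Integration.integral_sum) (use int in auto)
  also have "\<dots> = (\<Sum>i<b. (\<integral>\<omega>. Vv \<omega> 0 \<partial>M))"
    by (intro sum.cong refl mean) simp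
  also have "\<dots> = real b * (\<integral>\<omega>. Vv \<omega> 0 \<partial>M)"
    by simp
  finally show ?thesis ..
qed

lemma tilted_renewal_nonlattice_neg_ln:
  fixes V :: "'a \<Rightarrow> real"
  assumes "prob_space M" "1 \<le> b" and [measurable]: "V \<in> borel_measurable M"
    and V: "AE \<omega> in M. 0 < V \<omega> \<and> V \<omega> < 1" and mean: "b * (\<integral>\<omega>. V \<omega> \<partial>M) = 1"
    and "\<not> lattice_law (distr M borel (\<lambda>\<omega>. - ln (V \<omega>)))"
  shows "tilted_renewal_nonlattice (distr M borel (\<lambda>\<omega>. - ln (V \<omega>))) b"
proof -
  interpret M: prob_space M by fact
  have "(\<integral>x. b * exp (- x) \<partial>distr M borel (\<lambda>\<omega>. - ln (V \<omega>))) = (\<integral>\<omega>. b * exp (- (- ln (V \<omega>))) \<partial>M)"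
    by (rule integral_distr) measurable
  also have "\<dots> = (\<integral>\<omega>. b * V \<omega> \<partial>M)"
  proof (rule integral_cong_AE)
    show "AE \<omega> in M. b * exp (- (- ln (V \<omega>))) = b * V \<omega>"
      using V by eventually_elim simp
  qed measurable
  finally have "(\<integral>x. b * exp (- x) \<partial>distr M borel (\<lambda>\<omega>. - ln (V \<omega>))) = 1"
    using mean by simp
  moreover have "AE x in distr M borel (\<lambda>\<omega>. - ln (V \<omega>)). 0 < x"
  proof (subst AE_distr_iff)
    show "AE \<omega> in M. 0 < - ln (V \<omega>)"
      using V by eventually_elim (simp add: ln_less_zero)
  qed measurable
  ultimately show ?thesis
    using assms(2,6)
    by (intro tilted_renewal_nonlattice.intro tilted_renewal.intro tilted_renewal_axioms.intro
        tilted_renewal_nonlattice_axioms.intro M.prob_space_distr) simp_all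
qed

lemma mu_neg_ln:
  fixes V :: "'a \<Rightarrow> real"
  assumes "tilted_renewal (distr M borel (\<lambda>\<omega>. - ln (V \<omega>))) b"
    and [measurable]: "V \<in> borel_measurable M" and V: "AE \<omega> in M. 0 < V \<omega>"
  shows "tilted_renewal.mu (distr M borel (\<lambda>\<omega>. - ln (V \<omega>))) b = b * (\<integral>\<omega>. - V \<omega> * ln (V \<omega>) \<partial>M)"
proof -
  interpret tilted_renewal "distr M borel (\<lambda>\<omega>. - ln (V \<omega>))" b by fact
  have "mu = (\<integral>\<omega>. b * exp (- (- ln (V \<omega>))) * (- ln (V \<omega>)) \<partial>M)"
    unfolding mu_def tilt_def by (rule integral_distr) measurable
  also have "\<dots> = (\<integral>\<omega>. b * (- V \<omega> * ln (V \<omega>)) \<partial>M)"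
  proof (rule integral_cong_AE)
    show "AE \<omega> in M. b * exp (- (- ln (V \<omega>))) * (- ln (V \<omega>)) = b * (- V \<omega> * ln (V \<omega>))"
      using V by eventually_elim simp
  qed measurable
  finally show ?thesis by simp
qed

lemma distr_comp_eq:
  assumes "X \<in> borel_measurable M" "Y \<in> borel_measurable M" "distr M borel X = distr M borel Y"
    and [measurable]: "f \<in> borel_measurable borel"
  shows "distr M borel (\<lambda>\<omega>. f (X \<omega>)) = distr M borel (\<lambda>\<omega>. f (Y \<omega>))"
  using distr_distr[OF assms(4) assms(1)] distr_distr[OF assms(4) assms(2)] assms(3)
  by (simp add: comp_def)

lemma measure_prod_ge_eq_measure_sum_neg_ln_le:
  fixes W :: "nat \<Rightarrow> 'a \<Rightarrow> real"
  assumes [measurable]: "\<And>j. j \<in> J \<Longrightarrow> W j \<in> borel_measurable M"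
    and "finite J" "AE \<omega> in M. \<forall>j\<in>J. 0 < W j \<omega>" "0 < n" "0 < K"
  shows "measure M {\<omega> \<in> space M. n * (\<Prod>j\<in>J. W j \<omega>) \<ge> K}
    = measure M {\<omega> \<in> space M. (\<Sum>j\<in>J. - ln (W j \<omega>)) \<le> ln (n / K)}"
proof (rule measure_eq_AE)
  show "AE \<omega> in M. (\<omega> \<in> {\<omega> \<in> space M. n * (\<Prod>j\<in>J. W j \<omega>) \<ge> K})
      = (\<omega> \<in> {\<omega> \<in> space M. (\<Sum>j\<in>J. - ln (W j \<omega>)) \<le> ln (n / K)})"
    using assms(3)
  proof eventually_elim
    case (elim \<omega>)
    then show ?case
      using prod_ge_iff_sum_neg_ln_le[OF assms(2) _ assms(4,5), of "\<lambda>j. W j \<omega>"] by simp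
  qed
qed (use assms(2) in auto)

lemma expected_count_sums:
  fixes V :: "'a \<Rightarrow> real" and W :: "nat \<Rightarrow> 'a \<Rightarrow> real"
  assumes "prob_space M" and R: "tilted_renewal (distr M borel (\<lambda>\<omega>. - ln (V \<omega>))) b"
    and [measurable]: "V \<in> borel_measurable M" and V_pos: "AE \<omega> in M. 0 < V \<omega>"
    and indep: "prob_space.indep_vars M (\<lambda>_. borel) W {1..}"
    and law: "\<And>j. 1 \<le> j \<Longrightarrow> distr M borel (W j) = distr M borel V"
    and "0 < n" "0 < K"
  shows "(\<lambda>k. b ^ k * measure M {\<omega> \<in> space M. n * (\<Prod>j\<in>{1..k}. W j \<omega>) \<ge> K})
    sums (n / K * tilted_renewal.phi (distr M borel (\<lambda>\<omega>. - ln (V \<omega>))) b (ln (n / K)))"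
proof -
  interpret M: prob_space M by fact
  interpret tilted_renewal "distr M borel (\<lambda>\<omega>. - ln (V \<omega>))" b by fact
  have W_meas[measurable]: "W j \<in> borel_measurable M" if "1 \<le> j" for j
    using indep that unfolding M.indep_vars_def by auto
  define X where "X j \<omega> = - ln (W j \<omega>)" for j \<omega>
  have "M.indep_vars (\<lambda>_. borel) X {1..}"
    unfolding X_def[abs_def] by (rule M.indep_vars_compose2[OF indep]) measurable
  moreover have "distr M borel (X j) = distr M borel (\<lambda>\<omega>. - ln (V \<omega>))" if "1 \<le> j" for j
    unfolding X_def by (rule distr_comp_eq[OF W_meas[OF that] _ law[OF that]]) simp_all
  ultimately have conv_iter_eq: "conv_iter k exp_density t
      = exp (- t) * b ^ k * measure M {\<omega> \<in> space M. (\<Sum>j\<in>{1..k}. X j \<omega>) \<le> t}" for k t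
    by (intro conv_iter_exp_density_eq measure_partial_sum_le_Suc[OF \<open>prob_space M\<close>])
       (auto simp: heaviside_def M.prob_space)
  have "AE \<omega> in M. 0 < W j \<omega>" if "1 \<le> j" for j
  proof -
    have "AE x in distr M borel (W j). 0 < x"
      unfolding law[OF that] using V_pos by (subst AE_distr_iff) auto
    then show ?thesis
      using that by (subst (asm) AE_distr_iff) auto
  qed
  then have "AE \<omega> in M. \<forall>j\<in>{1..k}. 0 < W j \<omega>" for k
    by (intro AE_finite_allI) auto
  then have "measure M {\<omega> \<in> space M. n * (\<Prod>j\<in>{1..k}. W j \<omega>) \<ge> K}
      = measure M {\<omega> \<in> space M. (\<Sum>j\<in>{1..k}. - ln (W j \<omega>)) \<le> ln (n / K)}" for k
    by (intro measure_prod_ge_eq_measure_sum_neg_ln_le) (use assms(7,8) in auto)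
  then have "b ^ k * measure M {\<omega> \<in> space M. n * (\<Prod>j\<in>{1..k}. W j \<omega>) \<ge> K}
      = n / K * conv_iter k exp_density (ln (n / K))" for k
    using assms(7,8) by (simp add: conv_iter_eq X_def exp_minus)
  then show ?thesis
    by (simp only: sums_conv_iter_exp_density)
qed

theorem corollary3:
  fixes M :: "'a measure" and b :: nat
    and Vv :: "'a \<Rightarrow> nat \<Rightarrow> real"
    and W :: "nat \<Rightarrow> 'a \<Rightarrow> real"
  assumes "prob_space M"
    and "b \<ge> 2"
    and "\<And>i. i < b \<Longrightarrow> (\<lambda>\<omega>. Vv \<omega> i) \<in> borel_measurable M"
    and "AE \<omega> in M. (\<forall>i<b. Vv \<omega> i \<ge> 0) \<and> (\<Sum>i<b. Vv \<omega> i) = 1"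
    and "\<And>i. i < b \<Longrightarrow> distr M borel (\<lambda>\<omega>. Vv \<omega> i) = distr M borel (\<lambda>\<omega>. Vv \<omega> 0)"
    and "measure M {\<omega> \<in> space M. Vv \<omega> 0 = 0} = 0"
    and "measure M {\<omega> \<in> space M. Vv \<omega> 0 = 1} = 0"
    and "\<not> lattice_law (distr M borel (\<lambda>\<omega>. - ln (Vv \<omega> 0)))"
    and "prob_space.indep_vars M (\<lambda>_. borel) W {1..}"
    and "\<And>j. j \<ge> 1 \<Longrightarrow> distr M borel (W j) = distr M borel (\<lambda>\<omega>. Vv \<omega> 0)"
  shows "\<forall>\<epsilon>>0. \<exists>R. \<forall>n K :: real. K > 0 \<longrightarrow> n / K \<ge> R \<longrightarrow>
           (let f = (\<lambda>k. real b ^ k * measure M {\<omega> \<in> space M. n * (\<Prod>j\<in>{1..k}. W j \<omega>) \<ge> K});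
                \<mu> = real b * (\<integral>\<omega>. - Vv \<omega> 0 * ln (Vv \<omega> 0) \<partial>M)
            in summable f \<and> \<bar>(K / n) * (\<Sum>k. f k) - 1 / \<mu>\<bar> \<le> \<epsilon>)"
proof -
  define V where "V \<omega> = Vv \<omega> 0" for \<omega>
  have V_meas: "V \<in> borel_measurable M"
    using assms(2) assms(3)[of 0] by (simp add: V_def[abs_def])
  have V_01: "AE \<omega> in M. 0 < V \<omega> \<and> V \<omega> < 1"
    unfolding V_def using assms(2) by (intro AE_component_pos_less_1[OF assms(1) _ assms(3,4,6,7)]) auto
  then have V_pos: "AE \<omega> in M. 0 < V \<omega>"
    by (auto elim: eventually_mono)
  have "real b * (\<integral>\<omega>. V \<omega> \<partial>M) = 1"
    unfolding V_def using assms(2) by (intro exchangeable_component_mean[OF assms(1,3,4,5)]) auto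
  moreover have "\<not> lattice_law (distr M borel (\<lambda>\<omega>. - ln (V \<omega>)))"
    using assms(8) by (simp add: V_def)
  ultimately interpret R: tilted_renewal_nonlattice "distr M borel (\<lambda>\<omega>. - ln (V \<omega>))" "real b"
    using tilted_renewal_nonlattice_neg_ln[OF assms(1) _ V_meas V_01] assms(2) by simp
  have "(\<lambda>k. real b ^ k * measure M {\<omega> \<in> space M. n * (\<Prod>j\<in>{1..k}. W j \<omega>) \<ge> K})
      sums (n / K * R.phi (ln (n / K)))" if "0 < n" "0 < K" for n K
    using expected_count_sums[OF assms(1) R.tilted_renewal_axioms V_meas V_pos assms(9) _ that] assms(10)
    by (simp add: V_def)
  from R.scaled_sums_asymptotics[OF this] show ?thesis
    using mu_neg_ln[OF R.tilted_renewal_axioms V_meas V_pos] by (simp add: V_def Let_def)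
qed

end
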